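(* Let $\mathcal{O}$ be any finite set of regular control flow operations (possibly including the operations of GKAT: if-then-else, sequential composition, while-do). Then there exists $k>0$ such that the guarded language $L_k$ is not generated by $\mathcal{O}$.
   Context: Guarded strings and languages. For finite sets $T$ (primitive tests) and $\Sigma$ (primitive actions), the Boolean expressions $\mathsf{BA}(T)$ are generated by $b ::= \mathsf{false}\mid\mathsf{true}\mid t\ (t\in T)\mid b\vee c\mid b\wedge c\mid \overline{b}$. Atoms are $\mathsf{At}_T=2^T$; for $\alpha\in\mathsf{At}_T$, $\alpha\le b$ means $b$ is true under the truth assignment making exactly the tests in $\alpha$ true. KAT expressions $\mathsf{KAT}(\Sigma,T)$: $e::= b\in\mathsf{BA}(T)\mid p\in\Sigma\mid e+f\mid e\cdot f\mid e^*$. A guarded string is a word in $\mathsf{At}_T(\Sigma\,\mathsf{At}_T)^*$; a guarded language is a set of guarded strings. If $w=w'\alpha$ and $x=\alpha x'$, then $w\diamond x=w'\alpha x'$; for guarded languages, $L\diamond K=\{w\diamond x: w\in L,x\in K, w\diamond x\text{ defined}\}$, $L^{(0)}=\mathsf{At}_T$, $L^{(n+1)}=L\diamond L^{(n)}$, $L^{( * )}=\bigcup_n L^{(n)}$. The language of a KAT expression: $L(b)=\{\alpha:\alpha\le b\}$, $L(p)=\{\alpha p\beta:\alpha,\beta\in\mathsf{At}_T\}$, $L(e+f)=L(e)\cup L(f)$, $L(ef)=L(e)\diamond L(f)$, $L(e^* )=L(e)^{( * )}$. $\mathcal{G}(\Sigma,T)$ denotes the set of guarded languages that are regular (as languages over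 the finite alphabet $\mathsf{At}_T\cup\Sigma$). A guarded language $L$ is deterministic if for all distinct $w,w'\in L$: (i) $w$ is not a proper prefix of $w'$, and (ii) the first position where $w$ and $w'$ differ is an atom. Substitution. Given maps $\mathfrak{s}:\Sigma_0\to\mathcal{G}(\Sigma_1,T_1)$ and $\mathfrak{t}:T_0\to\mathsf{BA}(T_1)$: an atom $\beta\in\mathsf{At}_{T_1}$ is $\mathfrak{t}$-consistent with $\alpha\in\mathsf{At}_{T_0}$ if for all $t\in T_0$, $\alpha\le t$ iff $\beta\le\mathfrak{t}(t)$. For $L$ over $(\Sigma_0,T_0)$, $\mathrm{apply}_{\mathfrak{t}}(L)$ is the set of $\beta_0p_0\beta_1\cdots p_{n-1}\beta_n$ such that some $\alpha_0p_0\alpha_1\cdots p_{n-1}\alpha_n\in L$ has each $\beta_i$ $\mathfrak{t}$-consistent with $\alpha_i$. For $L$ over $(\Sigma_0,T_1)$, $\mathrm{apply}^{\mathfrak{s}}(L)$ is the set of all $\alpha_0\diamond w_0\diamond\alpha_1\diamond\cdots\diamond w_{n-1}\diamond\alpha_n$ with $\alpha_0p_0\alpha_1\cdots p_{n-1}\alpha_n\in L$ and $w_i\in\mathfrak{s}(p_i)$. Put $\mathrm{apply}^{\mathfrak{s}}_{\mathfrak{t}}=\mathrm{apply}^{\mathfrak{s}}\circ\mathrm{apply}_{\mathfrak{t}}$. Regular control flow operations. For $e\in\mathsf{KAT}(\{x_1,\dots,x_n\},\{y_1,\dots,y_m\})$, $O_e$ is the $(n+m)$-ary operation which, for any finite $\Sigma,T$,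 takes $L_1,\dots,L_n\in\mathcal{G}(\Sigma,T)$ and $b_1,\dots,b_m\in\mathsf{BA}(T)$ and returns $\mathrm{apply}^{\mathfrak{s}}_{\mathfrak{t}}(L(e))$ where $\mathfrak{s}(x_i)=L_i$, $\mathfrak{t}(y_i)=b_i$. If $L(e)$ is deterministic, $O_e$ is called a (deterministic) regular control flow operation. A set $\mathcal{O}$ of such operations generates $L\in\mathcal{G}(\Sigma,T)$ if $L$ belongs to the smallest set of guarded languages containing $L(p)$ for all $p\in\Sigma$ and $L(b)$ for all $b\in\mathsf{BA}(T)$ and closed under: if $O_e\in\mathcal{O}$ has $n$ language and $m$ test parameters, $L_1,\dots,L_n$ are in the set and $b_1,\dots,b_m\in\mathsf{BA}(T)$, then $O_e(L_1,\dots,L_n,b_1,\dots,b_m)$ is in the set. The language $L_k$ ($k>0$): $T=\{t_1,\dots,t_k\}$, $\Sigma=\{p_1,\dots,p_k\}$, $\alpha_i=\{t_i\}\in\mathsf{At}_T$. $L_k$ consists of all guarded strings $\alpha_{i_1}\,p_1\,\alpha_{i_2}\,p_{i_1}\,\alpha_{i_3}\,p_{i_2}\cdots\alpha_{i_n}\,p_{i_{n-1}}\,\alpha_{i_n}$ with $n\ge1$, each $i_j\in\{1,\dots,k\}$, $i_1\ne1$, and $i_j\ne i_{j+1}$ for all $j<n$ (i.e. the $j$-th atom $\alpha_{i_j}$, $j\le n$, is followed by action $p_{i_{j-1}}$ with $i_0=1$, and the string ends with the atom $\alpha_{i_n}$ repeated). *)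

theory Defs
  imports Main
begin

datatype 't bexp = BFalse | BTrue | BTest 't | BOr "'t bexp" "'t bexp"
  | BAnd "'t bexp" "'t bexp" | BNot "'t bexp"

(* alpha <= b : b is true under the assignment making exactly the tests in alpha true *)
fun beval :: "'t set \<Rightarrow> 't bexp \<Rightarrow> bool" where
  "beval \<alpha> BFalse = False"
| "beval \<alpha> BTrue = True"
| "beval \<alpha> (BTest t) = (t \<in> \<alpha>)"
| "beval \<alpha> (BOr b c) = (beval \<alpha> b \<or> beval \<alpha> c)"
| "beval \<alpha> (BAnd b c) = (beval \<alpha> b \<and> beval \<alpha> c)"
| "beval \<alpha> (BNot b) = (\<not> beval \<alpha> b)"

fun btests :: "'t bexp \<Rightarrow> 't set" where
  "btests BFalse = {}"
| "btests BTrue = {}"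
| "btests (BTest t) = {t}"
| "btests (BOr b c) = btests b \<union> btests c"
| "btests (BAnd b c) = btests b \<union> btests c"
| "btests (BNot b) = btests b"

datatype ('p, 't) kat = KTest "'t bexp" | KAct 'p | KPlus "('p,'t) kat" "('p,'t) kat"
  | KSeq "('p,'t) kat" "('p,'t) kat" | KStar "('p,'t) kat"

fun kacts :: "('p,'t) kat \<Rightarrow> 'p set" where
  "kacts (KTest b) = {}"
| "kacts (KAct p) = {p}"
| "kacts (KPlus e f) = kacts e \<union> kacts f"
| "kacts (KSeq e f) = kacts e \<union> kacts f"
| "kacts (KStar e) = kacts e"

fun ktests :: "('p,'t) kat \<Rightarrow> 't set" where
  "ktests (KTest b) = btests b"
| "ktests (KAct p) = {}"
| "ktests (KPlus e f) = ktests e \<union> ktests f"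
| "ktests (KSeq e f) = ktests e \<union> ktests f"
| "ktests (KStar e) = ktests e"

text \<open>Letters of the alphabet At_T \<union> Sigma; an atom is a subset of T.
  A guarded string is a word (list of letters) of the shape alpha0 p0 alpha1 ... p(n-1) alpha_n.\<close>

datatype ('p, 't) gsym = GAt "'t set" | GAct 'p

type_synonym ('p, 't) gstring = "('p, 't) gsym list"
type_synonym ('p, 't) glang = "('p, 't) gstring set"

fun is_gs :: "'p set \<Rightarrow> 't set \<Rightarrow> ('p,'t) gstring \<Rightarrow> bool" where
  "is_gs S T [GAt a] = (a \<subseteq> T)"
| "is_gs S T (GAt a # GAct p # w) = (a \<subseteq> T \<and> p \<in> S \<and> is_gs S T w)"
| "is_gs S T _ = False"

definition atoms :: "'t set \<Rightarrow> ('p,'t) glang" where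
  "atoms T = {[GAt a] | a. a \<subseteq> T}"

(* w \<diamond> x for w = w' alpha, x = alpha x' is w' alpha x' = butlast w @ x *)
definition gdiam :: "('p,'t) glang \<Rightarrow> ('p,'t) glang \<Rightarrow> ('p,'t) glang" where
  "gdiam L K = {butlast w @ x | w x. w \<in> L \<and> x \<in> K \<and> w \<noteq> [] \<and> x \<noteq> [] \<and> last w = hd x}"

fun gpow :: "'t set \<Rightarrow> ('p,'t) glang \<Rightarrow> nat \<Rightarrow> ('p,'t) glang" where
  "gpow T L 0 = atoms T"
| "gpow T L (Suc n) = gdiam L (gpow T L n)"

definition gstar :: "'t set \<Rightarrow> ('p,'t) glang \<Rightarrow> ('p,'t) glang" where
  "gstar T L = (\<Union>n. gpow T L n)"

fun langK :: "'t set \<Rightarrow> ('p,'t) kat \<Rightarrow> ('p,'t) glang" where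
  "langK T (KTest b) = {[GAt a] | a. a \<subseteq> T \<and> beval a b}"
| "langK T (KAct p) = {[GAt a, GAct p, GAt b] | a b. a \<subseteq> T \<and> b \<subseteq> T}"
| "langK T (KPlus e f) = langK T e \<union> langK T f"
| "langK T (KSeq e f) = gdiam (langK T e) (langK T f)"
| "langK T (KStar e) = gstar T (langK T e)"

definition regular_over :: "'a set \<Rightarrow> 'a list set \<Rightarrow> bool" where
  "regular_over A L \<longleftrightarrow>
     (\<exists>(Q :: nat set) q0 \<delta> F. finite Q \<and> q0 \<in> Q \<and> (\<forall>q\<in>Q. \<forall>a\<in>A. \<delta> q a \<in> Q) \<and> F \<subseteq> Q \<and>
        L = {w. set w \<subseteq> A \<and> foldl \<delta> q0 w \<in> F})"

definition Greg :: "'p set \<Rightarrow> 't set \<Rightarrow> ('p,'t) glang set" where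
  "Greg S T = {L. (\<forall>w\<in>L. is_gs S T w) \<and>
      regular_over ({GAt a | a. a \<subseteq> T} \<union> GAct ` S) L}"

definition deterministic :: "('p,'t) glang \<Rightarrow> bool" where
  "deterministic L \<longleftrightarrow> (\<forall>w\<in>L. \<forall>w'\<in>L. w \<noteq> w' \<longrightarrow>
      (\<nexists>u. u \<noteq> [] \<and> w' = w @ u) \<and>
      (\<forall>i. i < length w \<and> i < length w' \<and> take i w = take i w' \<and> w ! i \<noteq> w' ! i \<longrightarrow>
           (\<exists>a. w ! i = GAt a) \<and> (\<exists>a. w' ! i = GAt a)))"

definition tconsistent :: "'t0 set \<Rightarrow> ('t0 \<Rightarrow> 't1 bexp) \<Rightarrow> 't0 set \<Rightarrow> 't1 set \<Rightarrow> bool" where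
  "tconsistent T0 tt \<alpha> \<beta> \<longleftrightarrow> (\<forall>t\<in>T0. t \<in> \<alpha> \<longleftrightarrow> beval \<beta> (tt t))"

fun tsym_rel :: "'t0 set \<Rightarrow> 't1 set \<Rightarrow> ('t0 \<Rightarrow> 't1 bexp) \<Rightarrow> ('p,'t0) gsym \<Rightarrow> ('p,'t1) gsym \<Rightarrow> bool" where
  "tsym_rel T0 T1 tt (GAt \<alpha>) (GAt \<beta>) = (\<beta> \<subseteq> T1 \<and> tconsistent T0 tt \<alpha> \<beta>)"
| "tsym_rel T0 T1 tt (GAct p) (GAct q) = (p = q)"
| "tsym_rel T0 T1 tt _ _ = False"

definition apply_t :: "'t0 set \<Rightarrow> 't1 set \<Rightarrow> ('t0 \<Rightarrow> 't1 bexp) \<Rightarrow> ('p,'t0) glang \<Rightarrow> ('p,'t1) glang" where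
  "apply_t T0 T1 tt L = {w'. \<exists>w\<in>L. list_all2 (tsym_rel T0 T1 tt) w w'}"

(* alpha0 \<diamond> w0 \<diamond> alpha1 \<diamond> ... \<diamond> w(n-1) \<diamond> alpha_n with w_i \<in> s(p_i) *)
fun subst_gs :: "('p0 \<Rightarrow> ('p1,'t) glang) \<Rightarrow> ('p0,'t) gstring \<Rightarrow> ('p1,'t) glang" where
  "subst_gs s [GAt a] = {[GAt a]}"
| "subst_gs s (GAt a # GAct p # w) = gdiam (gdiam {[GAt a]} (s p)) (subst_gs s w)"
| "subst_gs s _ = {}"

definition apply_s :: "('p0 \<Rightarrow> ('p1,'t) glang) \<Rightarrow> ('p0,'t) glang \<Rightarrow> ('p1,'t) glang" where
  "apply_s s L = (\<Union>w\<in>L. subst_gs s w)"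

text \<open>An operation is coded as (n, m, e) with e a KAT expression whose action variables are
  x_i = i for i < n and whose test variables are y_j = j for j < m.\<close>

type_synonym opcode = "nat \<times> nat \<times> (nat, nat) kat"

definition rcfo :: "opcode \<Rightarrow> bool" where
  "rcfo c = (case c of (n, m, e) \<Rightarrow>
     kacts e \<subseteq> {0..<n} \<and> ktests e \<subseteq> {0..<m} \<and> deterministic (langK {0..<m} e))"

definition op_apply :: "'t set \<Rightarrow> opcode \<Rightarrow> ('p,'t) glang list \<Rightarrow> 't bexp list \<Rightarrow> ('p,'t) glang" where
  "op_apply T c Ls bs = (case c of (n, m, e) \<Rightarrow>
     apply_s (\<lambda>i. Ls ! i) (apply_t {0..<m} T (\<lambda>j. bs ! j) (langK {0..<m} e)))"

inductive_set generated :: "'p set \<Rightarrow> 't set \<Rightarrow> opcode set \<Rightarrow> ('p,'t) glang set"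
  for S :: "'p set" and T :: "'t set" and Ops :: "opcode set" where
  gen_act: "p \<in> S \<Longrightarrow> langK T (KAct p) \<in> generated S T Ops"
| gen_test: "btests b \<subseteq> T \<Longrightarrow> langK T (KTest b) \<in> generated S T Ops"
| gen_op: "(n, m, e) \<in> Ops \<Longrightarrow> length Ls = n \<Longrightarrow> (\<forall>L\<in>set Ls. L \<in> generated S T Ops \<and> L \<in> Greg S T) \<Longrightarrow> length bs = m \<Longrightarrow> (\<forall>b\<in>set bs. btests b \<subseteq> T) \<Longrightarrow>
      op_apply T (n, m, e) Ls bs \<in> generated S T Ops"

text \<open>T = {t_1..t_k} and Sigma = {p_1..p_k} are represented by {1..k}; alpha_i = {i}.\<close>

fun lk_word :: "nat \<Rightarrow> nat list \<Rightarrow> (nat, nat) gstring" where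
  "lk_word prev [] = []"
| "lk_word prev [i] = [GAt {i}, GAct prev, GAt {i}]"
| "lk_word prev (i # j # is) = GAt {i} # GAct prev # lk_word i (j # is)"

definition Lk :: "nat \<Rightarrow> (nat, nat) glang" where
  "Lk k = {lk_word 1 is | is. is \<noteq> [] \<and> set is \<subseteq> {1..k} \<and> hd is \<noteq> 1 \<and>
            (\<forall>j. Suc j < length is \<longrightarrow> is ! j \<noteq> is ! Suc j)}"

end

theory Submission
  imports Defs "HOL-Library.Sublist"
begin

(*
  Call a language tangled (for k) if, behind a common prefix, it contains the encodings
  lk_word i xs of all index sequences xs admissible after some index i; L_k is tangled.
  We show that all generated languages are deterministic and, once k is at least 4 plus the
  sum of 2^m * n over the operations (n language and m test parameters), not tangled.  Basic languages are too short to be tangled.  A word of O_e(L_1,...,L_n,b)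
  factors into words of the L_c glued along a word of L(e), and determinism makes this
  factorization a function of the prefix read so far.  Follow the factorizations of the
  tangled words: if from some path on every continuation stays inside one argument word,
  that argument is tangled.  Otherwise every one-letter continuation leaves the current
  argument word at once, and the k - 1 possible exit letters l are labelled by the abstracted
  atom of alpha_l and the next argument.  With at most 2^m * n labels two exits collide, and
  exchanging the tails of their factorizations produces two words of the result that first
  differ in an action, contradicting determinism.
*)

section \<open>Determinism through diverging words\<close>

definition diverge :: "('p,'t) gstring \<Rightarrow> ('p,'t) gstring \<Rightarrow> bool" where
  "diverge w w' \<longleftrightarrow> (\<exists>q a a' s s'. a \<noteq> a' \<and> w = q @ GAt a # s \<and> w' = q @ GAt a' # s')"

(* Implied by deterministic for guarded strings and, unlike it, inherited by residuals. *)
definition atom_deterministic :: "('p,'t) glang \<Rightarrow> bool" where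
  "atom_deterministic L \<longleftrightarrow> (\<forall>w\<in>L. \<forall>w'\<in>L. w \<noteq> w' \<longrightarrow> diverge w w')"

lemma atom_deterministicD:
  "atom_deterministic L \<Longrightarrow> w \<in> L \<Longrightarrow> w' \<in> L \<Longrightarrow> w \<noteq> w' \<Longrightarrow> diverge w w'"
  unfolding atom_deterministic_def by blast

lemma diverge_Nil [simp]: "\<not> diverge [] w"
  unfolding diverge_def by simp

lemma diverge_Cons_Cons [simp]: "diverge (z # w) (z # w') \<longleftrightarrow> diverge w w'"
proof
  assume "diverge (z # w) (z # w')"
  then obtain q a a' s s' where d: "a \<noteq> a'" "z # w = q @ GAt a # s" "z # w' = q @ GAt a' # s'"
    unfolding diverge_def by blast
  then obtain q' where "q = z # q'"
    by (cases q) auto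
  then have "w = q' @ GAt a # s" "w' = q' @ GAt a' # s'"
    using d by simp_all
  then show "diverge w w'"
    unfolding diverge_def using d(1) by blast
next
  assume "diverge w w'"
  then obtain q a a' s s' where "a \<noteq> a'" "w = q @ GAt a # s" "w' = q @ GAt a' # s'"
    unfolding diverge_def by blast
  then show "diverge (z # w) (z # w')"
    unfolding diverge_def by (intro exI[of _ "z # q"]) auto
qed

lemma diverge_append_left_iff [simp]: "diverge (p @ w) (p @ w') \<longleftrightarrow> diverge w w'"
  by (induction p) simp_all

lemma diverge_append_right: "diverge w w' \<Longrightarrow> diverge (w @ z) (w' @ z')"
  unfolding diverge_def by (metis append.assoc append_Cons)

lemma diverge_actions_eq: "diverge (GAct x # w) (GAct y # w') \<Longrightarrow> x = y"
proof -
  assume "diverge (GAct x # w) (GAct y # w')"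
  then obtain q a a' s s' where "GAct x # w = q @ GAt a # s" "GAct y # w' = q @ GAt a' # s'"
    unfolding diverge_def by blast
  then show "x = y" by (cases q) auto
qed

lemma deterministic_imp_atom_deterministic:
  assumes det: "deterministic L"
  shows "atom_deterministic L"
  unfolding atom_deterministic_def
proof (intro ballI impI)
  fix w w' assume w: "w \<in> L" "w' \<in> L" "w \<noteq> w'"
  have no_ext: "\<nexists>u. u \<noteq> [] \<and> y = x @ u" if "x \<in> L" "y \<in> L" "x \<noteq> y" for x y
    using det that unfolding deterministic_def by blast
  have first_diff_atoms: "(\<exists>a. w ! i = GAt a) \<and> (\<exists>a. w' ! i = GAt a)"
    if "i < length w" "i < length w'" "take i w = take i w'" "w ! i \<noteq> w' ! i" for i
    using det w that unfolding deterministic_def by blast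
  have "w \<parallel> w'"
  proof
    show "\<not> prefix w w'" "\<not> prefix w' w"
      using no_ext[of w w'] no_ext[of w' w] w unfolding prefix_def by auto
  qed
  then obtain q x x' s s' where xx: "x \<noteq> x'" "w = q @ x # s" "w' = q @ x' # s'"
    by (blast dest: parallel_decomp)
  then have "(\<exists>a. x = GAt a) \<and> (\<exists>a. x' = GAt a)"
    using first_diff_atoms[of "length q"] by simp
  then show "diverge w w'"
    unfolding diverge_def using xx by blast
qed

lemma atom_deterministic_no_extension:
  "atom_deterministic L \<Longrightarrow> w \<in> L \<Longrightarrow> w @ z \<in> L \<Longrightarrow> z = []"
proof (rule ccontr)
  assume "atom_deterministic L" "w \<in> L" "w @ z \<in> L" "z \<noteq> []"
  then have "diverge (w @ []) (w @ z)"
    by (intro atom_deterministicD) simp_all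
  then show False
    by (simp only: diverge_append_left_iff diverge_Nil)
qed

lemma atom_deterministic_same_action:
  "atom_deterministic L \<Longrightarrow> p @ GAct x # w \<in> L \<Longrightarrow> p @ GAct y # w' \<in> L \<Longrightarrow> x = y"
proof (rule ccontr)
  assume det: "atom_deterministic L" and mem: "p @ GAct x # w \<in> L" "p @ GAct y # w' \<in> L"
    and "x \<noteq> y"
  then have "p @ GAct x # w \<noteq> p @ GAct y # w'" by simp
  then have "diverge (p @ GAct x # w) (p @ GAct y # w')"
    by (rule atom_deterministicD[OF det mem])
  then show False
    using \<open>x \<noteq> y\<close> by (simp add: diverge_actions_eq)
qed

lemma atom_deterministic_residual: "atom_deterministic L \<Longrightarrow> atom_deterministic {z. p @ z \<in> L}"
  unfolding atom_deterministic_def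
proof (intro ballI impI)
  fix w w' assume det: "\<forall>w\<in>L. \<forall>w'\<in>L. w \<noteq> w' \<longrightarrow> diverge w w'"
    and mem: "w \<in> {z. p @ z \<in> L}" "w' \<in> {z. p @ z \<in> L}" and "w \<noteq> w'"
  then have "p @ w \<noteq> p @ w'" by simp
  then have "diverge (p @ w) (p @ w')"
    using det[rule_format, of "p @ w" "p @ w'"] mem by simp
  then show "diverge w w'" by simp
qed

lemma atom_deterministic_single_action_lang: "atom_deterministic (langK T (KAct p))"
  unfolding atom_deterministic_def diverge_def
proof (intro ballI impI)
  fix w w' assume "w \<in> langK T (KAct p)" "w' \<in> langK T (KAct p)" and ne: "w \<noteq> w'"
  then obtain a b a' b' where ab: "w = [GAt a, GAct p, GAt b]" "w' = [GAt a', GAct p, GAt b']"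
    by auto
  show "\<exists>q a a' s s'. a \<noteq> a' \<and> w = q @ GAt a # s \<and> w' = q @ GAt a' # s'"
  proof (cases "a = a'")
    case True
    then show ?thesis using ab ne by (intro exI[of _ "[GAt a, GAct p]"]) auto
  next
    case False
    then show ?thesis using ab by (intro exI[of _ "[]"]) auto
  qed
qed

lemma atom_deterministic_test_lang: "atom_deterministic (langK T (KTest b))"
  unfolding atom_deterministic_def diverge_def by (auto intro!: exI[of _ "[]"])

lemma is_gs_hd_last:
  "is_gs S T w \<Longrightarrow> w \<noteq> [] \<and> (\<exists>a. hd w = GAt a \<and> a \<subseteq> T) \<and> (\<exists>a. last w = GAt a \<and> a \<subseteq> T)"
  by (induction S T w rule: is_gs.induct) auto

lemma is_gs_diamond: "is_gs S T w \<Longrightarrow> is_gs S T x \<Longrightarrow> last w = hd x \<Longrightarrow> is_gs S T (butlast w @ x)"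
proof (induction S T w rule: is_gs.induct)
  case (1 S T a)
  then show ?case using is_gs_hd_last[of S T x] by (cases x) auto
next
  case (2 S T a p w)
  then obtain z w' where "w = z # w'" using is_gs_hd_last by (cases w) auto
  then show ?case using 2 by (cases w') auto
qed simp_all

lemma is_gs_mono: "is_gs S T w \<Longrightarrow> S \<subseteq> S' \<Longrightarrow> is_gs S' T w"
  by (induction S T w rule: is_gs.induct) auto

lemma is_gs_action: "is_gs S T w \<Longrightarrow> GAct p \<in> set w \<Longrightarrow> p \<in> S"
  by (induction S T w rule: is_gs.induct) auto

lemma is_gs_atom: "is_gs S T w \<Longrightarrow> GAt a \<in> set w \<Longrightarrow> a \<subseteq> T"
  by (induction S T w rule: is_gs.induct) auto

lemma is_gs_odd_length: "is_gs S T w \<Longrightarrow> odd (length w)"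
  by (induction S T w rule: is_gs.induct) simp_all

lemma is_gs_ConsE:
  assumes "is_gs S T w" "length w \<noteq> 1"
  obtains a p w' where "w = GAt a # GAct p # w'" "is_gs S T w'"
  using assms by (cases "(S, T, w)" rule: is_gs.cases) auto

lemma is_gs_suffix_after_action:
  "is_gs S T (v @ y) \<Longrightarrow> v \<noteq> [] \<Longrightarrow> last v = GAct p \<Longrightarrow> is_gs S T y"
proof (induction v rule: length_induct)
  case (1 v)
  obtain x v' where v: "v = x # v'" using \<open>v \<noteq> []\<close> by (cases v) auto
  show ?case
  proof (cases v')
    case Nil
    then show ?thesis using 1 v by simp
  next
    case (Cons x' v'')
    have "length (v @ y) \<noteq> 1" using v Cons by simp
    with \<open>is_gs S T (v @ y)\<close> obtain a q w where w: "v @ y = GAt a # GAct q # w" "is_gs S T w"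
      by (rule is_gs_ConsE)
    then have "w = v'' @ y" using v Cons by simp
    show ?thesis
    proof (cases "v'' = []")
      case True
      then show ?thesis using w \<open>w = v'' @ y\<close> by simp
    next
      case False
      moreover have "last v'' = GAct p" "length v'' < length v"
        using False \<open>last v = GAct p\<close> v Cons by simp_all
      ultimately show ?thesis
        using 1(1)[rule_format, of v''] w(2) \<open>w = v'' @ y\<close> by simp
    qed
  qed
qed

lemma gdiamI: "w \<in> L \<Longrightarrow> x \<in> K \<Longrightarrow> w \<noteq> [] \<Longrightarrow> x \<noteq> [] \<Longrightarrow> last w = hd x \<Longrightarrow> butlast w @ x \<in> gdiam L K"
  unfolding gdiam_def mem_Collect_eq by (intro exI[of _ w] exI[of _ x]) simp

lemma gdiamE:
  assumes "x \<in> gdiam L K"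
  obtains w y where "x = butlast w @ y" "w \<in> L" "y \<in> K" "w \<noteq> []" "y \<noteq> []" "last w = hd y"
  using assms unfolding gdiam_def by blast

lemma gdiam_is_gs:
  "\<forall>w\<in>L. is_gs S T w \<Longrightarrow> \<forall>w\<in>K. is_gs S T w \<Longrightarrow> w \<in> gdiam L K \<Longrightarrow> is_gs S T w"
  by (auto elim!: gdiamE intro: is_gs_diamond)

lemma gpow_is_gs: "\<forall>w\<in>L. is_gs S T w \<Longrightarrow> w \<in> gpow T L n \<Longrightarrow> is_gs S T w"
  by (induction n arbitrary: w) (auto simp: atoms_def dest: gdiam_is_gs[rotated 2])

lemma langK_is_gs: "w \<in> langK T e \<Longrightarrow> is_gs (kacts e) T w"
proof (induction e arbitrary: w)
  case (KPlus e f)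
  then show ?case using is_gs_mono[of _ T _ "kacts (KPlus e f)"] by fastforce
next
  case (KSeq e f)
  have "\<forall>w\<in>langK T e. is_gs (kacts (KSeq e f)) T w" "\<forall>w\<in>langK T f. is_gs (kacts (KSeq e f)) T w"
    using KSeq.IH is_gs_mono by fastforce+
  then show ?case using gdiam_is_gs KSeq.prems by auto
next
  case (KStar e)
  then show ?case using gpow_is_gs[of "langK T e" "kacts e" T] by (auto simp: gstar_def)
qed auto

section \<open>Tangled languages\<close>

definition paths :: "nat \<Rightarrow> nat \<Rightarrow> nat list set" where
  "paths k i = {xs. xs \<noteq> [] \<and> set xs \<subseteq> {1..k} \<and> distinct_adj (i # xs)}"

lemma paths_not_Nil: "xs \<in> paths k i \<Longrightarrow> xs \<noteq> []"
  unfolding paths_def by simp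

lemma paths_singleton_iff [simp]: "[l] \<in> paths k i \<longleftrightarrow> l \<in> {1..k} \<and> l \<noteq> i"
  unfolding paths_def by auto

lemma paths_append_iff:
  assumes "xs \<noteq> []" "ys \<noteq> []"
  shows "xs @ ys \<in> paths k i \<longleftrightarrow> xs \<in> paths k i \<and> ys \<in> paths k (last xs)"
  using assms distinct_adj_append_iff[of "i # xs" ys]
  unfolding paths_def by (auto simp: distinct_adj_Cons[of "last xs"])

lemma paths_snoc: "xs \<in> paths k i \<Longrightarrow> l \<in> {1..k} \<Longrightarrow> l \<noteq> last xs \<Longrightarrow> xs @ [l] \<in> paths k i"
  using paths_append_iff[of xs "[l]"] paths_not_Nil by auto

lemma lk_word_not_Nil: "xs \<noteq> [] \<Longrightarrow> lk_word p xs \<noteq> []"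
  by (cases "(p, xs)" rule: lk_word.cases) auto

lemma lk_word_hd: "xs \<noteq> [] \<Longrightarrow> hd (lk_word p xs) = GAt {hd xs}"
  by (cases "(p, xs)" rule: lk_word.cases) auto

lemma lk_word_append:
  "xs \<noteq> [] \<Longrightarrow> ys \<noteq> [] \<Longrightarrow> lk_word p (xs @ ys) = butlast (lk_word p xs) @ lk_word (last xs) ys"
proof (induction p xs rule: lk_word.induct)
  case (2 p i)
  then show ?case by (cases ys) auto
next
  case (3 p i j xs)
  then show ?case using lk_word_not_Nil[of "j # xs" i] by auto
qed simp

lemma lk_word_last: "xs \<noteq> [] \<Longrightarrow> lk_word p xs = butlast (lk_word p xs) @ [GAt {last xs}]"
  by (induction p xs rule: lk_word.induct) (auto simp: lk_word_not_Nil)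

lemma lk_word_snoc:
  "xs \<noteq> [] \<Longrightarrow> lk_word p (xs @ [l]) = butlast (lk_word p xs) @ [GAt {l}, GAct (last xs), GAt {l}]"
  using lk_word_append[of xs "[l]" p] by simp

lemma lk_word_butlast_ends_with_action:
  "xs \<noteq> [] \<Longrightarrow> \<exists>z q. butlast (lk_word p xs) = z @ [GAct q]"
  by (induction p xs rule: lk_word.induct) (fastforce simp: lk_word_not_Nil)+

(* L contains a copy of L_k, shifted by the prefix u and started after the index i. *)
definition tangled :: "nat \<Rightarrow> (nat, nat) glang \<Rightarrow> bool" where
  "tangled k L \<longleftrightarrow> (\<exists>u i. \<forall>xs \<in> paths k i. u @ lk_word i xs \<in> L)"

lemma Lk_tangled: "tangled k (Lk k)"
  unfolding tangled_def
proof (intro exI[of _ "[]"] exI[of _ 1] ballI)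
  fix xs assume "xs \<in> paths k 1"
  then have "xs \<noteq> []" "set xs \<subseteq> {1..k}" "hd xs \<noteq> 1" "distinct_adj xs"
    unfolding paths_def by (auto simp: distinct_adj_Cons)
  then show "[] @ lk_word 1 xs \<in> Lk k"
    unfolding Lk_def distinct_adj_conv_nth by auto
qed

lemma tangled_has_long_word:
  assumes "tangled k L" "2 \<le> k"
  shows "\<exists>w\<in>L. 3 < length w"
proof -
  obtain u i where tang: "\<forall>xs \<in> paths k i. u @ lk_word i xs \<in> L"
    using assms(1) unfolding tangled_def by blast
  define l where "l = (if i = 1 then 2 else 1 :: nat)"
  define l' where "l' = (if l = 1 then 2 else 1 :: nat)"
  have "[l, l'] \<in> paths k i"
    unfolding paths_def l_def l'_def using assms(2) by auto
  then show ?thesis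
    using tang by force
qed

section \<open>Factorizations of substituted words\<close>

fun atom_of :: "('p,'t) gsym \<Rightarrow> 't set" where
  "atom_of (GAt a) = a"
| "atom_of (GAct p) = {}"

definition last_atom :: "('p,'t) gstring \<Rightarrow> 't set" where
  "last_atom w = atom_of (last w)"

lemma last_atom_singleton [simp]: "last_atom [GAt a] = a"
  by (simp add: last_atom_def)

lemma last_atom_append [simp]: "y \<noteq> [] \<Longrightarrow> last_atom (v @ y) = last_atom y"
  by (simp add: last_atom_def)

lemma is_gs_last_atom: "is_gs S T w \<Longrightarrow> last w = GAt (last_atom w) \<and> last_atom w \<subseteq> T"
  using is_gs_hd_last[of S T w] by (auto simp: last_atom_def)

(* A call (c, w) substitutes the word w of the c-th argument language for an action c.
   Consecutive words are glued at their common boundary atom; b is the first boundary atom. *)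
type_synonym ('c,'p,'t) calls = "('c \<times> ('p,'t) gstring) list"

fun calls_valid :: "('c \<Rightarrow> ('p,'t) glang) \<Rightarrow> 't set \<Rightarrow> ('c,'p,'t) calls \<Rightarrow> bool" where
  "calls_valid Lc b [] \<longleftrightarrow> True"
| "calls_valid Lc b ((c, w) # cs) \<longleftrightarrow> w \<in> Lc c \<and> w \<noteq> [] \<and> hd w = GAt b \<and>
     last w = GAt (last_atom w) \<and> calls_valid Lc (last_atom w) cs"

fun calls_word :: "'t set \<Rightarrow> ('c,'p,'t) calls \<Rightarrow> ('p,'t) gstring" where
  "calls_word b [] = [GAt b]"
| "calls_word b ((c, w) # cs) = butlast w @ calls_word (last_atom w) cs"

fun calls_prefix :: "'t set \<Rightarrow> ('c,'p,'t) calls \<Rightarrow> ('p,'t) gstring" where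
  "calls_prefix b [] = []"
| "calls_prefix b ((c, w) # cs) = butlast w @ calls_prefix (last_atom w) cs"

fun calls_end :: "'t set \<Rightarrow> ('c,'p,'t) calls \<Rightarrow> 't set" where
  "calls_end b [] = b"
| "calls_end b ((c, w) # cs) = calls_end (last_atom w) cs"

(* The word of the operation's expression traced by the calls, boundary atoms mapped by ab. *)
fun calls_pattern :: "('t set \<Rightarrow> 's set) \<Rightarrow> 't set \<Rightarrow> ('c,'p,'t) calls \<Rightarrow> ('c,'s) gstring" where
  "calls_pattern ab b [] = [GAt (ab b)]"
| "calls_pattern ab b ((c, w) # cs) = GAt (ab b) # GAct c # calls_pattern ab (last_atom w) cs"

lemma calls_pattern_not_Nil [simp]: "calls_pattern ab b cs \<noteq> []"
  by (cases cs) auto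

lemma calls_pattern_hd: "\<exists>r. calls_pattern ab b cs = GAt (ab b) # r"
  by (cases cs) auto

lemma calls_word_append: "calls_word b (P @ R) = calls_prefix b P @ calls_word (calls_end b P) R"
  by (induction P arbitrary: b) auto

lemma calls_prefix_append: "calls_prefix b (P @ R) = calls_prefix b P @ calls_prefix (calls_end b P) R"
  by (induction P arbitrary: b) auto

lemma calls_valid_append: "calls_valid Lc b (P @ R) \<longleftrightarrow> calls_valid Lc b P \<and> calls_valid Lc (calls_end b P) R"
  by (induction P arbitrary: b) auto

lemma calls_pattern_append:
  "calls_pattern ab b (P @ R) = butlast (calls_pattern ab b P) @ calls_pattern ab (calls_end b P) R"
  by (induction P arbitrary: b) auto

lemma calls_word_call:
  "calls_word b (P @ (c, w) # R) = calls_prefix b P @ butlast w @ calls_word (last_atom w) R"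
  by (simp add: calls_word_append)

lemma calls_word_hd: "calls_valid Lc b cs \<Longrightarrow> \<exists>r. calls_word b cs = GAt b # r"
proof (induction cs arbitrary: b)
  case (Cons cw cs)
  obtain c w where cw: "cw = (c, w)" by (cases cw)
  with Cons.prems have w: "w \<noteq> []" "hd w = GAt b" "last w = GAt (last_atom w)"
    and rest: "calls_valid Lc (last_atom w) cs" by auto
  obtain r where r: "calls_word (last_atom w) cs = GAt (last_atom w) # r"
    using Cons.IH[OF rest] by blast
  show ?case
  proof (cases "butlast w = []")
    case True
    then have "w = [last w]" using w(1) by (metis append_Nil append_butlast_last_id)
    then have "w = [GAt b]" using w(2) by (metis list.sel(1))
    then show ?thesis using cw r by simp
  next
    case False
    then have "hd (butlast w) = GAt b" using w by (metis append_butlast_last_id hd_append2)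
    then show ?thesis using cw False by (cases "butlast w") auto
  qed
qed simp

lemma calls_word_Cons:
  assumes "calls_valid Lc b ((c, w) # cs)"
  shows "calls_word b ((c, w) # cs) = w @ tl (calls_word (last_atom w) cs)"
proof -
  from assms have "w \<noteq> []" "last w = GAt (last_atom w)" and rest: "calls_valid Lc (last_atom w) cs"
    by auto
  then have w: "w = butlast w @ [GAt (last_atom w)]"
    by (metis append_butlast_last_id)
  obtain r where "calls_word (last_atom w) cs = GAt (last_atom w) # r"
    using calls_word_hd[OF rest] by blast
  then show ?thesis by (subst (2) w) simp
qed

lemma calls_pattern_action: "(c, w) \<in> set cs \<Longrightarrow> GAct c \<in> set (calls_pattern ab b cs)"
  by (induction cs arbitrary: b) auto

fun map_atom :: "('t set \<Rightarrow> 's set) \<Rightarrow> ('p,'t) gsym \<Rightarrow> ('p,'s) gsym" where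
  "map_atom ab (GAt a) = GAt (ab a)"
| "map_atom ab (GAct p) = GAct p"

lemma map_atom_calls_pattern: "map (map_atom ab) (calls_pattern id b cs) = calls_pattern ab b cs"
  by (induction cs arbitrary: b) auto

lemma calls_word_in_subst_gs: "calls_valid s b cs \<Longrightarrow> calls_word b cs \<in> subst_gs s (calls_pattern id b cs)"
proof (induction cs arbitrary: b)
  case Nil
  then show ?case by simp
next
  case (Cons cw cs)
  obtain c w where cw: "cw = (c, w)" by (cases cw)
  with Cons.prems have w: "w \<in> s c" "w \<noteq> []" "hd w = GAt b" "last w = GAt (last_atom w)"
    and rest: "calls_valid s (last_atom w) cs" by auto
  obtain r where r: "calls_word (last_atom w) cs = GAt (last_atom w) # r"
    using calls_word_hd[OF rest] by blast
  have "butlast [GAt b] @ w \<in> gdiam {[GAt b]} (s c)"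
    using w by (intro gdiamI) simp_all
  then have "butlast w @ calls_word (last_atom w) cs
      \<in> gdiam (gdiam {[GAt b]} (s c)) (subst_gs s (calls_pattern id (last_atom w) cs))"
    using w r Cons.IH[OF rest] by (intro gdiamI) (simp_all add: id_def)
  then show ?case using cw by (simp add: id_def)
qed

lemma subst_gs_calls:
  "x \<in> subst_gs s w' \<Longrightarrow> \<exists>b cs. x = calls_word b cs \<and> w' = calls_pattern id b cs \<and> calls_valid s b cs"
proof (induction s w' arbitrary: x rule: subst_gs.induct)
  case (1 s a)
  then show ?case by (intro exI[of _ a] exI[of _ "[]"]) simp
next
  case (2 s a p w)
  then obtain x1 z where xz: "x = butlast x1 @ z" "x1 \<in> gdiam {[GAt a]} (s p)" "z \<in> subst_gs s w"
    "x1 \<noteq> []" "last x1 = hd z"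
    by (auto elim: gdiamE)
  from xz(2) have x1: "x1 \<in> s p" "hd x1 = GAt a"
    by (auto elim!: gdiamE)
  obtain b cs where bcs: "z = calls_word b cs" "w = calls_pattern id b cs" "calls_valid s b cs"
    using "2.IH"[OF xz(3)] by blast
  have "last x1 = GAt b"
    using calls_word_hd[OF bcs(3)] bcs(1) xz(5) by auto
  then have "last_atom x1 = b"
    by (simp add: last_atom_def)
  then show ?case
    using xz x1 bcs \<open>last x1 = GAt b\<close>
    by (intro exI[of _ a] exI[of _ "(p, x1) # cs"]) (simp add: id_def)
qed simp_all

(* The atom over T0 that beta is tconsistent with. *)
definition test_abstraction :: "'t0 set \<Rightarrow> ('t0 \<Rightarrow> 't1 bexp) \<Rightarrow> 't1 set \<Rightarrow> 't0 set" where
  "test_abstraction T0 tt \<beta> = {t \<in> T0. beval \<beta> (tt t)}"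

lemma tsym_rel_iff:
  assumes "\<forall>a. x = GAt a \<longrightarrow> a \<subseteq> T0"
  shows "tsym_rel T0 T1 tt x x' \<longleftrightarrow>
    x = map_atom (test_abstraction T0 tt) x' \<and> (\<forall>a. x' = GAt a \<longrightarrow> a \<subseteq> T1)"
proof (cases x; cases x')
  fix \<alpha> \<beta> assume "x = GAt \<alpha>" "x' = GAt \<beta>"
  moreover have "tconsistent T0 tt \<alpha> \<beta> \<longleftrightarrow> \<alpha> = test_abstraction T0 tt \<beta>"
    using assms \<open>x = GAt \<alpha>\<close> unfolding tconsistent_def test_abstraction_def by blast
  ultimately show ?thesis by auto
qed auto

lemma list_all2_tsym_rel_iff:
  assumes "\<forall>a. GAt a \<in> set w \<longrightarrow> a \<subseteq> T0"
  shows "list_all2 (tsym_rel T0 T1 tt) w w' \<longleftrightarrow>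
    w = map (map_atom (test_abstraction T0 tt)) w' \<and> (\<forall>a. GAt a \<in> set w' \<longrightarrow> a \<subseteq> T1)"
  using assms
proof (induction w arbitrary: w')
  case (Cons x w)
  have x: "\<forall>a. x = GAt a \<longrightarrow> a \<subseteq> T0" and ws: "\<forall>a. GAt a \<in> set w \<longrightarrow> a \<subseteq> T0"
    using Cons.prems by auto
  show ?case
  proof (cases w')
    case (Cons x' w'')
    then show ?thesis
      using tsym_rel_iff[OF x, of T1 tt x'] Cons.IH[OF ws, of w''] by auto
  qed simp
qed auto

lemma apply_t_iff:
  assumes "\<forall>w\<in>L. \<forall>a. GAt a \<in> set w \<longrightarrow> a \<subseteq> T0"
  shows "w' \<in> apply_t T0 T1 tt L \<longleftrightarrow>
    map (map_atom (test_abstraction T0 tt)) w' \<in> L \<and> (\<forall>a. GAt a \<in> set w' \<longrightarrow> a \<subseteq> T1)"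
proof
  assume "w' \<in> apply_t T0 T1 tt L"
  then obtain w where w: "w \<in> L" "list_all2 (tsym_rel T0 T1 tt) w w'"
    unfolding apply_t_def by blast
  then show "map (map_atom (test_abstraction T0 tt)) w' \<in> L \<and> (\<forall>a. GAt a \<in> set w' \<longrightarrow> a \<subseteq> T1)"
    using list_all2_tsym_rel_iff[of w T0 T1 tt w'] assms by simp
next
  let ?w = "map (map_atom (test_abstraction T0 tt)) w'"
  assume w': "?w \<in> L \<and> (\<forall>a. GAt a \<in> set w' \<longrightarrow> a \<subseteq> T1)"
  then have "\<forall>a. GAt a \<in> set ?w \<longrightarrow> a \<subseteq> T0"
    using assms by blast
  then have "list_all2 (tsym_rel T0 T1 tt) ?w w'"
    using list_all2_tsym_rel_iff[of ?w T0 T1 tt w'] w' by simp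
  then show "w' \<in> apply_t T0 T1 tt L"
    unfolding apply_t_def using w' by blast
qed

(* O_e(L_1, ..., L_n, b) in factorized form, see op_apply_eq_composite. *)
definition composite ::
  "('c \<Rightarrow> ('p,'t) glang) \<Rightarrow> 't set \<Rightarrow> ('t set \<Rightarrow> 's set) \<Rightarrow> ('c,'s) glang \<Rightarrow> ('p,'t) glang" where
  "composite Lc T ab Le =
     {calls_word b cs | b cs. b \<subseteq> T \<and> calls_valid Lc b cs \<and> calls_pattern ab b cs \<in> Le}"

lemma composite_memI:
  "b \<subseteq> T \<Longrightarrow> calls_valid Lc b cs \<Longrightarrow> calls_pattern ab b cs \<in> Le \<Longrightarrow> calls_word b cs \<in> composite Lc T ab Le"
  unfolding composite_def by blast

lemma composite_memE:
  assumes "x \<in> composite Lc T ab Le"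
  obtains b cs where "b \<subseteq> T" "calls_valid Lc b cs" "calls_pattern ab b cs \<in> Le" "x = calls_word b cs"
  using assms unfolding composite_def by blast

lemma calls_valid_cong:
  "\<forall>c\<in>fst ` set cs. Lc c = Lc' c \<Longrightarrow> calls_valid Lc b cs \<longleftrightarrow> calls_valid Lc' b cs"
  by (induction cs arbitrary: b) auto

lemma calls_pattern_atoms_subset_iff:
  assumes "calls_valid Lc b cs" "\<forall>c. \<forall>w\<in>Lc c. is_gs S T w"
  shows "(\<forall>a. GAt a \<in> set (calls_pattern id b cs) \<longrightarrow> a \<subseteq> T) \<longleftrightarrow> b \<subseteq> T"
  using assms(1)
proof (induction cs arbitrary: b)
  case (Cons cw cs)
  obtain c w where cw: "cw = (c, w)" by (cases cw)
  with Cons.prems have "w \<in> Lc c" and rest: "calls_valid Lc (last_atom w) cs" by auto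
  then have "last_atom w \<subseteq> T"
    using assms(2) is_gs_last_atom by blast
  then show ?case
    using Cons.IH[OF rest] cw by auto
qed simp

lemma op_apply_iff_calls:
  "x \<in> op_apply T (n, m, e) Ls bs \<longleftrightarrow> (\<exists>b cs. x = calls_word b cs \<and> calls_valid ((!) Ls) b cs \<and>
     calls_pattern (test_abstraction {0..<m} ((!) bs)) b cs \<in> langK {0..<m} e \<and>
     (\<forall>a. GAt a \<in> set (calls_pattern id b cs) \<longrightarrow> a \<subseteq> T))"
proof -
  have apply_t: "w' \<in> apply_t {0..<m} T ((!) bs) (langK {0..<m} e) \<longleftrightarrow>
      map (map_atom (test_abstraction {0..<m} ((!) bs))) w' \<in> langK {0..<m} e \<and>
      (\<forall>a. GAt a \<in> set w' \<longrightarrow> a \<subseteq> T)" for w'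
    by (rule apply_t_iff) (use langK_is_gs is_gs_atom in blast)
  have "x \<in> op_apply T (n, m, e) Ls bs \<longleftrightarrow>
      (\<exists>w'\<in>apply_t {0..<m} T ((!) bs) (langK {0..<m} e). x \<in> subst_gs ((!) Ls) w')"
    unfolding op_apply_def apply_s_def by simp
  also have "\<dots> \<longleftrightarrow> (\<exists>b cs. x = calls_word b cs \<and> calls_valid ((!) Ls) b cs \<and>
      calls_pattern id b cs \<in> apply_t {0..<m} T ((!) bs) (langK {0..<m} e))"
    using subst_gs_calls calls_word_in_subst_gs by blast
  finally show ?thesis
    unfolding apply_t map_atom_calls_pattern by blast
qed

lemma op_apply_eq_composite:
  assumes "kacts e \<subseteq> {0..<n}" "length Ls = n" "\<forall>L\<in>set Ls. \<forall>w\<in>L. is_gs S T w"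
  shows "op_apply T (n, m, e) Ls bs =
    composite (\<lambda>c. if c < n then Ls ! c else {}) T (test_abstraction {0..<m} ((!) bs)) (langK {0..<m} e)"
    (is "_ = composite ?Lc T ?ab ?Le")
proof -
  have Lc_gs: "\<forall>c. \<forall>w\<in>?Lc c. is_gs S T w"
    using assms(2,3) by auto
  have valid_iff: "calls_valid ((!) Ls) b cs \<longleftrightarrow> calls_valid ?Lc b cs"
    if "calls_pattern ?ab b cs \<in> ?Le" for b cs
  proof (rule calls_valid_cong, rule ballI)
    fix c assume "c \<in> fst ` set cs"
    then obtain w where "(c, w) \<in> set cs" by auto
    then have "c \<in> kacts e"
      using is_gs_action[OF langK_is_gs[OF that] calls_pattern_action] by blast
    then show "Ls ! c = ?Lc c" using assms(1) by auto
  qed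
  have atoms_iff: "(\<forall>a. GAt a \<in> set (calls_pattern id b cs) \<longrightarrow> a \<subseteq> T) \<longleftrightarrow> b \<subseteq> T"
    if "calls_valid ?Lc b cs" for b cs
    using calls_pattern_atoms_subset_iff[OF that Lc_gs] .
  show ?thesis
  proof (intro set_eqI iffI)
    fix x assume "x \<in> op_apply T (n, m, e) Ls bs"
    then obtain b cs where x: "x = calls_word b cs" and cs: "calls_valid ((!) Ls) b cs"
      "calls_pattern ?ab b cs \<in> ?Le" "\<forall>a. GAt a \<in> set (calls_pattern id b cs) \<longrightarrow> a \<subseteq> T"
      unfolding op_apply_iff_calls by blast
    then have "calls_valid ?Lc b cs"
      using valid_iff[OF cs(2)] by simp
    moreover from this have "b \<subseteq> T"
      using atoms_iff cs(3) by blast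
    ultimately show "x \<in> composite ?Lc T ?ab ?Le"
      unfolding x using cs(2) by (intro composite_memI)
  next
    fix x assume "x \<in> composite ?Lc T ?ab ?Le"
    then obtain b cs where cs: "b \<subseteq> T" "calls_valid ?Lc b cs" "calls_pattern ?ab b cs \<in> ?Le"
      and x: "x = calls_word b cs"
      by (rule composite_memE)
    have "calls_valid ((!) Ls) b cs"
      using valid_iff[OF cs(3)] cs(2) by simp
    moreover have "\<forall>a. GAt a \<in> set (calls_pattern id b cs) \<longrightarrow> a \<subseteq> T"
      using atoms_iff[OF cs(2)] cs(1) by simp
    ultimately show "x \<in> op_apply T (n, m, e) Ls bs"
      unfolding op_apply_iff_calls x using cs(3) by blast
  qed
qed

section \<open>Determinism of factorizations\<close>

lemma calls_pattern_last: "last (calls_pattern ab b P) = GAt (ab (calls_end b P))"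
  by (induction P arbitrary: b) auto

lemma calls_word_diverge_at_start:
  "calls_valid Lc b cs \<Longrightarrow> calls_valid Lc b' cs' \<Longrightarrow> b \<noteq> b' \<Longrightarrow> diverge (calls_word b cs) (calls_word b' cs')"
  using calls_word_hd[of Lc b cs] calls_word_hd[of Lc b' cs'] unfolding diverge_def
  by (metis append_Nil)

lemma accepted_calls_Nil:
  assumes "atom_deterministic Le" "calls_pattern ab b [] \<in> Le" "calls_pattern ab b cs \<in> Le"
  shows "cs = []"
proof (cases cs)
  case (Cons cw R)
  obtain c w where "cw = (c, w)" by (cases cw)
  then have "[GAt (ab b)] \<in> Le" "[GAt (ab b)] @ GAct c # calls_pattern ab (last_atom w) R \<in> Le"
    using assms(2,3) Cons by simp_all
  from atom_deterministic_no_extension[OF assms(1) this] show ?thesis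
    by simp
qed

lemma accepted_calls_same_first_call:
  assumes "atom_deterministic Le" "calls_pattern ab b ((c, w) # R) \<in> Le" "calls_pattern ab b cs' \<in> Le"
  obtains w' R' where "cs' = (c, w') # R'"
proof (cases cs')
  case Nil
  then show ?thesis
    using accepted_calls_Nil[OF assms(1) _ assms(2)] assms(3) by simp
next
  case (Cons cw' R')
  obtain c' w' where "cw' = (c', w')" by (cases cw')
  then have "[GAt (ab b)] @ GAct c' # calls_pattern ab (last_atom w') R' \<in> Le"
    "[GAt (ab b)] @ GAct c # calls_pattern ab (last_atom w) R \<in> Le"
    using assms(2,3) Cons by simp_all
  then have "c' = c"
    using atom_deterministic_same_action[OF assms(1)] by blast
  then show ?thesis
    using that Cons \<open>cw' = (c', w')\<close> by blast
qed

lemma accepted_calls_first_call_cases: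
  assumes Lc_det: "\<And>c. atom_deterministic (Lc c)" and Le_det: "atom_deterministic Le"
    and cs: "calls_valid Lc b ((c, w) # R)" "calls_pattern ab b ((c, w) # R) \<in> Le"
    and cs': "calls_valid Lc b cs'" "calls_pattern ab b cs' \<in> Le"
  obtains (diverge) w' R' where "cs' = (c, w') # R'" "diverge w w'" "calls_valid Lc b ((c, w') # R')"
  | (same) R' where "cs' = (c, w) # R'"
      "calls_valid Lc (last_atom w) R" "calls_pattern ab (last_atom w) R \<in> {z. [GAt (ab b), GAct c] @ z \<in> Le}"
      "calls_valid Lc (last_atom w) R'" "calls_pattern ab (last_atom w) R' \<in> {z. [GAt (ab b), GAct c] @ z \<in> Le}"
proof -
  obtain w' R' where cs'_eq: "cs' = (c, w') # R'"
    using accepted_calls_same_first_call[OF Le_det cs(2) cs'(2)] .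
  show ?thesis
  proof (cases "w = w'")
    case True
    show ?thesis
      by (rule same[of R']) (use cs cs' cs'_eq True in simp_all)
  next
    case False
    have "w \<in> Lc c" "w' \<in> Lc c"
      using cs(1) cs'(1) cs'_eq by simp_all
    then have "diverge w w'"
      using atom_deterministicD[OF Lc_det] False by blast
    then show ?thesis
      using diverge cs'(1) cs'_eq by simp
  qed
qed

lemma calls_word_diverge:
  assumes Lc_det: "\<And>c. atom_deterministic (Lc c)"
  shows "atom_deterministic Le \<Longrightarrow> calls_valid Lc b cs \<Longrightarrow> calls_pattern ab b cs \<in> Le \<Longrightarrow>
    calls_valid Lc b' cs' \<Longrightarrow> calls_pattern ab b' cs' \<in> Le \<Longrightarrow>
    calls_word b cs \<noteq> calls_word b' cs' \<Longrightarrow> diverge (calls_word b cs) (calls_word b' cs')"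
proof (induction cs arbitrary: b b' cs' Le)
  case Nil
  show ?case
  proof (cases "b = b'")
    case True
    then have "cs' = []"
      using accepted_calls_Nil[OF Nil.prems(1,3)] Nil.prems(5) by simp
    then show ?thesis
      using Nil.prems(6) True by simp
  next
    case False
    then show ?thesis
      using Nil.prems(2,4) calls_word_diverge_at_start by blast
  qed
next
  case (Cons cw R)
  obtain c w where cw: "cw = (c, w)" by (cases cw)
  show ?case
  proof (cases "b = b'")
    case False
    then show ?thesis using calls_word_diverge_at_start Cons.prems(2,4) by blast
  next
    case True
    have v: "calls_valid Lc b ((c, w) # R)" "calls_pattern ab b ((c, w) # R) \<in> Le"
      "calls_valid Lc b cs'" "calls_pattern ab b cs' \<in> Le"
      using Cons.prems(2-5) cw True by simp_all
    show ?thesis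
    proof (cases rule: accepted_calls_first_call_cases[OF Lc_det Cons.prems(1) v, case_names diverge same])
      case (diverge w' R')
      then have "diverge (w @ tl (calls_word (last_atom w) R)) (w' @ tl (calls_word (last_atom w') R'))"
        by (simp add: diverge_append_right)
      then show ?thesis
        using calls_word_Cons[OF v(1)] calls_word_Cons[OF diverge(3)] cw diverge(1) True by simp
    next
      case (same R')
      have "calls_word (last_atom w) R \<noteq> calls_word (last_atom w) R'"
        using Cons.prems(6) cw same(1) True by auto
      then have "diverge (calls_word (last_atom w) R) (calls_word (last_atom w) R')"
        using Cons.IH[OF atom_deterministic_residual[OF Cons.prems(1)] same(2-5)] by blast
      then show ?thesis
        using cw same(1) True by simp
    qed
  qed
qed

lemma diverge_beyond_common_prefix:
  assumes "diverge w w'" "w @ r = p @ z" "w' @ r' = p @ z'"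
  obtains q a a' s s' where "a \<noteq> a'" "w = q @ GAt a # s" "w' = q @ GAt a' # s'" "length p \<le> length q"
proof -
  obtain q a a' s s' where d: "a \<noteq> a'" "w = q @ GAt a # s" "w' = q @ GAt a' # s'"
    using assms(1) unfolding diverge_def by blast
  have "(p @ z) ! length q = GAt a" "(p @ z') ! length q = GAt a'"
    unfolding assms(2)[symmetric] assms(3)[symmetric] d(2,3) by (simp_all add: nth_append)
  have "length p \<le> length q"
  proof (rule ccontr)
    assume "\<not> length p \<le> length q"
    then have "(p @ z) ! length q = (p @ z') ! length q"
      by (simp add: nth_append)
    then show False
      using \<open>(p @ z) ! length q = GAt a\<close> \<open>(p @ z') ! length q = GAt a'\<close> d(1) by simp
  qed
  then show ?thesis
    using that d by blast
qed

lemma diverge_extends_common_prefix: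
  assumes "diverge (v @ y) w'" "w' @ r = v @ x"
  shows "\<exists>y'. w' = v @ y' \<and> y' \<noteq> []"
proof -
  have "(v @ y) @ [] = v @ y" by simp
  then obtain q a a' s s' where d: "a \<noteq> a'" "v @ y = q @ GAt a # s" "w' = q @ GAt a' # s'"
    "length v \<le> length q"
    by (rule diverge_beyond_common_prefix[OF assms(1) _ assms(2)])
  have "v = take (length v) q"
    using arg_cong[OF d(2), of "take (length v)"] d(4) by simp
  then have "take (length v) w' = v"
    using d(3,4) by simp
  then have "w' = v @ drop (length v) w'"
    by (metis append_take_drop_id)
  moreover have "drop (length v) w' \<noteq> []"
    using d(3,4) by simp
  ultimately show ?thesis
    by blast
qed

lemma calls_word_split:
  "y \<noteq> [] \<Longrightarrow> calls_word b (P @ (c, v @ y) # R) = calls_prefix b P @ v @ butlast y @ calls_word (last_atom y) R"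
  by (simp add: calls_word_call butlast_append)

lemma accepted_calls_prefix_determines_call:
  assumes Lc_det: "\<And>c. atom_deterministic (Lc c)"
  shows "atom_deterministic Le \<Longrightarrow>
    calls_valid Lc b (P @ (c, v @ y) # R) \<Longrightarrow> calls_pattern ab b (P @ (c, v @ y) # R) \<in> Le \<Longrightarrow>
    v \<noteq> [] \<Longrightarrow> y \<noteq> [] \<Longrightarrow> calls_valid Lc b cs' \<Longrightarrow> calls_pattern ab b cs' \<in> Le \<Longrightarrow>
    calls_word b cs' = calls_prefix b P @ v @ x \<Longrightarrow> \<exists>y' R'. cs' = P @ (c, v @ y') # R' \<and> y' \<noteq> []"
proof (induction P arbitrary: b cs' Le)
  case Nil
  have v: "calls_valid Lc b ((c, v @ y) # R)" "calls_pattern ab b ((c, v @ y) # R) \<in> Le"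
    using Nil.prems(2,3) by simp_all
  show ?case
  proof (cases rule: accepted_calls_first_call_cases[OF Lc_det Nil.prems(1) v Nil.prems(6,7),
        case_names diverge same])
    case (diverge w' R')
    have "w' @ tl (calls_word (last_atom w') R') = v @ x"
      using Nil.prems(8) calls_word_Cons[OF diverge(3)] diverge(1) by simp
    then obtain y' where "w' = v @ y'" "y' \<noteq> []"
      using diverge_extends_common_prefix[OF diverge(2)] by blast
    then show ?thesis
      using diverge(1) by simp
  next
    case (same R')
    then show ?thesis
      using Nil.prems(5) by auto
  qed
next
  case (Cons cw P)
  obtain c0 w0 where cw: "cw = (c0, w0)" by (cases cw)
  have v: "calls_valid Lc b ((c0, w0) # P @ (c, v @ y) # R)" "calls_pattern ab b ((c0, w0) # P @ (c, v @ y) # R) \<in> Le"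
    using Cons.prems(2,3) cw by simp_all
  show ?case
  proof (cases rule: accepted_calls_first_call_cases[OF Lc_det Cons.prems(1) v Cons.prems(6,7),
        case_names diverge same])
    case (diverge w' R')
    let ?p = "calls_prefix b (cw # P) @ v"
    have "w0 @ tl (calls_word (last_atom w0) (P @ (c, v @ y) # R)) = ?p @ butlast y @ calls_word (last_atom y) R"
      using calls_word_split[OF Cons.prems(5), of b "cw # P" c v R] calls_word_Cons[OF v(1)] cw by simp
    moreover have "w' @ tl (calls_word (last_atom w') R') = ?p @ x"
      using Cons.prems(8) calls_word_Cons[OF diverge(3)] diverge(1) by simp
    ultimately obtain q a s where "w0 = q @ GAt a # s" "length ?p \<le> length q"
      using diverge_beyond_common_prefix[OF diverge(2)] by metis
    moreover have "length w0 \<le> length ?p"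
      using Cons.prems(4) cw by (cases v) auto
    ultimately show ?thesis
      by simp
  next
    case (same R')
    have "calls_word (last_atom w0) R' = calls_prefix (last_atom w0) P @ v @ x"
      using Cons.prems(8) cw same(1) by simp
    then have "\<exists>y' R''. R' = P @ (c, v @ y') # R'' \<and> y' \<noteq> []"
      using Cons.IH[OF atom_deterministic_residual[OF Cons.prems(1)] same(2,3) Cons.prems(4,5) same(4,5)]
      by blast
    then show ?thesis
      using same(1) cw by auto
  qed
qed

lemma calls_word_split_at_action:
  "calls_valid Lc b cs \<Longrightarrow> calls_word b cs = Q @ x \<Longrightarrow> Q \<noteq> [] \<Longrightarrow> last Q = GAct p \<Longrightarrow>
    \<exists>P c v y R. cs = P @ (c, v @ y) # R \<and> Q = calls_prefix b P @ v \<and> v \<noteq> [] \<and> y \<noteq> []"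
proof (induction cs arbitrary: b Q)
  case Nil
  then have "Q = [GAt b]" by (cases Q) auto
  then show ?case using Nil by simp
next
  case (Cons cw cs)
  obtain c w where cw: "cw = (c, w)" by (cases cw)
  have "w \<noteq> []" and rest: "calls_valid Lc (last_atom w) cs"
    using Cons.prems(1) cw by simp_all
  then have w: "w = butlast w @ [last w]"
    by simp
  have "Q @ x = butlast w @ calls_word (last_atom w) cs"
    using Cons.prems(2) cw by simp
  then obtain us where "Q = butlast w @ us \<and> us @ x = calls_word (last_atom w) cs \<or> Q @ us = butlast w"
    by (auto simp: append_eq_append_conv2)
  then show ?case
  proof (elim disjE conjE)
    assume Q: "Q = butlast w @ us" and us: "us @ x = calls_word (last_atom w) cs"
    show ?thesis
    proof (cases "us = []")
      case True
      then have "w = Q @ [last w]"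
        using Q w by simp
      then show ?thesis
        using cw Cons.prems(3) by (intro exI[of _ "[]"] exI[of _ c] exI[of _ Q] exI[of _ "[last w]"] exI[of _ cs]) auto
    next
      case False
      moreover have "last us = GAct p"
        using Q False Cons.prems(4) by simp
      ultimately obtain P c' v y R where "cs = P @ (c', v @ y) # R" "us = calls_prefix (last_atom w) P @ v"
        "v \<noteq> []" "y \<noteq> []"
        using Cons.IH[OF rest us[symmetric]] by blast
      then show ?thesis
        using Q cw by (intro exI[of _ "(c, w) # P"]) auto
    qed
  next
    assume "Q @ us = butlast w"
    then have "w = Q @ us @ [last w]"
      using w by (metis append.assoc)
    then show ?thesis
      using cw Cons.prems(3) by (intro exI[of _ "[]"] exI[of _ c] exI[of _ Q] exI[of _ "us @ [last w]"] exI[of _ cs]) auto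
  qed
qed

lemma length_calls_prefix_Cons:
  "y \<noteq> [] \<Longrightarrow> v' \<noteq> [] \<Longrightarrow> length v < length (calls_prefix b ((c, v @ y) # P) @ v')"
  by (simp add: butlast_append)

lemma calls_split_unique:
  "P1 @ (c1, v1 @ y1) # R1 = P2 @ (c2, v2 @ y2) # R2 \<Longrightarrow> calls_prefix b P1 @ v1 = calls_prefix b P2 @ v2 \<Longrightarrow>
    v1 \<noteq> [] \<Longrightarrow> v2 \<noteq> [] \<Longrightarrow> y1 \<noteq> [] \<Longrightarrow> y2 \<noteq> [] \<Longrightarrow> P1 = P2 \<and> c1 = c2 \<and> v1 = v2"
proof (induction P1 arbitrary: P2 b)
  case Nil
  show ?case
  proof (cases P2)
    case (Cons cw P2')
    then have "v1 = calls_prefix b ((c1, v1 @ y1) # P2') @ v2"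
      using Nil.prems(1,2) by simp
    then show ?thesis
      using length_calls_prefix_Cons[OF Nil.prems(5,4), of v1 b c1 P2'] by simp
  qed (use Nil.prems in simp)
next
  case (Cons cw P1')
  show ?case
  proof (cases P2)
    case Nil
    then have "v2 = calls_prefix b ((c2, v2 @ y2) # P1') @ v1"
      using Cons.prems(1,2) by auto
    then show ?thesis
      using length_calls_prefix_Cons[OF Cons.prems(6,3), of v2 b c2 P1'] by simp
  next
    case (Cons cw' P2')
    obtain c w where cw: "cw = (c, w)" by (cases cw)
    have eq: "cw' = cw" and tl: "P1' @ (c1, v1 @ y1) # R1 = P2' @ (c2, v2 @ y2) # R2"
      using Cons.prems(1) Cons by simp_all
    moreover have "calls_prefix (last_atom w) P1' @ v1 = calls_prefix (last_atom w) P2' @ v2"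
      using Cons.prems(2) Cons cw eq by simp
    ultimately show ?thesis
      using Cons.IH[OF tl _ Cons.prems(3-6)] Cons by simp
  qed
qed

(* Calls of single-atom words, i.e. tests: they add nothing to the glued word. *)
definition test_calls :: "'t set \<Rightarrow> 'c list \<Rightarrow> ('c,'p,'t) calls" where
  "test_calls g ts = map (\<lambda>t. (t, [GAt g])) ts"

lemma test_calls_simps [simp]:
  "calls_prefix g (test_calls g ts) = []"
  "calls_end g (test_calls g ts) = g"
  "calls_word g (test_calls g ts @ R) = calls_word g R"
  "calls_pattern ab g (test_calls g ts) = concat (map (\<lambda>t. [GAt (ab g), GAct t]) ts) @ [GAt (ab g)]"
  "calls_pattern ab g (test_calls g ts @ R) = concat (map (\<lambda>t. [GAt (ab g), GAct t]) ts) @ calls_pattern ab g R"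
  "calls_valid Lc g (test_calls g ts) \<longleftrightarrow> (\<forall>t\<in>set ts. [GAt g] \<in> Lc t)"
  "calls_valid Lc g (test_calls g ts @ R) \<longleftrightarrow> (\<forall>t\<in>set ts. [GAt g] \<in> Lc t) \<and> calls_valid Lc g R"
  unfolding test_calls_def by (induction ts) auto

lemma test_calls_fresh:
  assumes "\<And>c. atom_deterministic (Lc c)"
    and "calls_valid Lc b ((P @ (c, v @ [GAt g]) # test_calls g ts) @ (c', GAt g # u) # R)" "u \<noteq> []"
  shows "c' \<notin> set ts"
proof
  assume "c' \<in> set ts"
  moreover have "\<forall>t\<in>set ts. [GAt g] \<in> Lc t" "[GAt g] @ u \<in> Lc c'"
    using assms(2) by (simp_all add: calls_valid_append)
  ultimately show False
    using atom_deterministic_no_extension[OF assms(1)] assms(3) by blast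
qed

lemma calls_word_first_action:
  assumes gs: "\<forall>c. \<forall>w\<in>Lc c. is_gs S T w"
  shows "calls_valid Lc g R \<Longrightarrow> calls_word g R = GAt g # GAct p # r \<Longrightarrow>
    \<exists>ts c w R'. R = test_calls g ts @ (c, GAt g # GAct p # w) # R' \<and> w \<noteq> []"
proof (induction R)
  case (Cons cw R)
  obtain t w where cw: "cw = (t, w)" by (cases cw)
  have v: "w \<in> Lc t" "hd w = GAt g" "calls_valid Lc (last_atom w) R"
    using Cons.prems(1) cw by simp_all
  then have gsw: "is_gs S T w"
    using gs by blast
  show ?case
  proof (cases "length w = 1")
    case True
    then have w: "w = [GAt g]"
      using v(2) by (cases w) auto
    then obtain ts c w' R' where "R = test_calls g ts @ (c, GAt g # GAct p # w') # R'" "w' \<noteq> []"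
      using Cons.IH v(3) Cons.prems(2) cw by auto
    then show ?thesis
      using cw w by (intro exI[of _ "t # ts"]) (auto simp: test_calls_def)
  next
    case False
    with gsw obtain a q w' where w: "w = GAt a # GAct q # w'" "is_gs S T w'"
      by (rule is_gs_ConsE)
    have "calls_word g ((t, w) # R) = w @ tl (calls_word (last_atom w) R)"
      using Cons.prems(1) cw by (simp only: calls_word_Cons)
    then have "q = p" "a = g"
      using Cons.prems(2) cw w by simp_all
    moreover have "w' \<noteq> []"
      using is_gs_hd_last[OF w(2)] by simp
    ultimately show ?thesis
      using cw w by (intro exI[of _ "[]"]) (auto simp: test_calls_def)
  qed
qed simp

lemma test_sequence_determined:
  "atom_deterministic Le \<Longrightarrow> E @ concat (map (\<lambda>t. [GAt A, GAct t]) (xs @ [c])) @ GAt A' # r \<in> Le \<Longrightarrow>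
   E @ concat (map (\<lambda>t. [GAt A, GAct t]) (ys @ [c])) @ GAt A' # r' \<in> Le \<Longrightarrow>
   c \<notin> set xs \<Longrightarrow> c \<notin> set ys \<Longrightarrow> xs = ys"
proof (induction xs arbitrary: ys E)
  case Nil
  show ?case
  proof (cases ys)
    case (Cons y ys')
    have "(E @ [GAt A]) @ GAct c # GAt A' # r \<in> Le"
      "(E @ [GAt A]) @ GAct y # concat (map (\<lambda>t. [GAt A, GAct t]) (ys' @ [c])) @ GAt A' # r' \<in> Le"
      using Nil.prems(2,3) Cons by simp_all
    then have "c = y"
      by (rule atom_deterministic_same_action[OF Nil.prems(1)])
    then show ?thesis
      using Nil.prems(5) Cons by simp
  qed simp
next
  case (Cons x xs)
  show ?case
  proof (cases ys)
    case Nil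
    have "(E @ [GAt A]) @ GAct x # concat (map (\<lambda>t. [GAt A, GAct t]) (xs @ [c])) @ GAt A' # r \<in> Le"
      "(E @ [GAt A]) @ GAct c # GAt A' # r' \<in> Le"
      using Cons.prems(2,3) Nil by simp_all
    then have "x = c"
      by (rule atom_deterministic_same_action[OF Cons.prems(1)])
    then show ?thesis
      using Cons.prems(4) by simp
  next
    case (Cons y ys')
    have "(E @ [GAt A]) @ GAct x # concat (map (\<lambda>t. [GAt A, GAct t]) (xs @ [c])) @ GAt A' # r \<in> Le"
      "(E @ [GAt A]) @ GAct y # concat (map (\<lambda>t. [GAt A, GAct t]) (ys' @ [c])) @ GAt A' # r' \<in> Le"
      using Cons.prems(2,3) \<open>ys = y # ys'\<close> by simp_all
    then have "x = y"
      by (rule atom_deterministic_same_action[OF Cons.prems(1)])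
    moreover have "xs = ys'"
    proof (rule Cons.IH[OF Cons.prems(1), of "E @ [GAt A, GAct x]"])
      show "(E @ [GAt A, GAct x]) @ concat (map (\<lambda>t. [GAt A, GAct t]) (xs @ [c])) @ GAt A' # r \<in> Le"
        "(E @ [GAt A, GAct x]) @ concat (map (\<lambda>t. [GAt A, GAct t]) (ys' @ [c])) @ GAt A' # r' \<in> Le"
        using Cons.prems(2,3) \<open>ys = y # ys'\<close> \<open>x = y\<close> by simp_all
    qed (use Cons.prems(4,5) \<open>ys = y # ys'\<close> in simp_all)
    ultimately show ?thesis
      using \<open>ys = y # ys'\<close> by simp
  qed
qed

lemma composite_swap_tail:
  assumes "calls_valid Lc b (P1 @ (c, w1) # R1)" "calls_valid Lc b (P2 @ (c, w2) # R2)"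
    "calls_pattern ab b (P2 @ (c, w2) # R2) \<in> Le" "calls_pattern ab b P1 = calls_pattern ab b P2"
    "last_atom w1 = last_atom w2" "b \<subseteq> T"
  shows "calls_word b (P1 @ (c, w1) # R2) \<in> composite Lc T ab Le"
proof -
  have "calls_valid Lc b (P1 @ (c, w1) # R2)"
    using assms(1,2,5) unfolding calls_valid_append by simp
  moreover have "ab (calls_end b P1) = ab (calls_end b P2)"
    using calls_pattern_last[of ab b P1] calls_pattern_last[of ab b P2] assms(4) by simp
  then have "calls_pattern ab b (P1 @ (c, w1) # R2) = calls_pattern ab b (P2 @ (c, w2) # R2)"
    using assms(4,5) unfolding calls_pattern_append by simp
  ultimately show ?thesis
    using assms(3,6) composite_memI by metis
qed

lemma calls_valid_call_tail:
  "calls_valid Lc b (P @ (c, v @ y) # R) \<Longrightarrow> y \<noteq> [] \<Longrightarrow>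
    last y = GAt (last_atom y) \<and> calls_valid Lc (last_atom y) R"
  by (simp add: calls_valid_append)

lemma calls_valid_call_odd_tail:
  assumes gs: "\<forall>c. \<forall>w\<in>Lc c. is_gs S T w" and valid: "calls_valid Lc b (P @ (c, v @ y) # R)"
    and v: "v \<noteq> []" "last v = GAct q"
  shows "odd (length y)"
proof -
  have "v @ y \<in> Lc c"
    using valid by (simp add: calls_valid_append)
  then have "is_gs S T (v @ y)"
    using gs by blast
  then show ?thesis
    using is_gs_suffix_after_action[OF _ v] is_gs_odd_length by blast
qed

lemma atom_deterministic_composite:
  assumes "\<And>c. atom_deterministic (Lc c)" "atom_deterministic Le"
  shows "atom_deterministic (composite Lc T ab Le)"
  unfolding atom_deterministic_def
proof (intro ballI impI)
  fix x x' assume x: "x \<in> composite Lc T ab Le" and x': "x' \<in> composite Lc T ab Le" and "x \<noteq> x'"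
  obtain b cs where bcs: "calls_valid Lc b cs" "calls_pattern ab b cs \<in> Le" "x = calls_word b cs"
    using x by (rule composite_memE)
  obtain b' cs' where bcs': "calls_valid Lc b' cs'" "calls_pattern ab b' cs' \<in> Le" "x' = calls_word b' cs'"
    using x' by (rule composite_memE)
  show "diverge x x'"
    using calls_word_diverge[OF assms bcs(1,2) bcs'(1,2)] bcs(3) bcs'(3) \<open>x \<noteq> x'\<close> by simp
qed

section \<open>Following the factorizations of a tangled composite\<close>

locale tangled_composite =
  fixes Lc :: "'c \<Rightarrow> (nat, nat) glang" and T :: "nat set" and ab :: "nat set \<Rightarrow> 's set"
    and Le :: "('c, 's) glang" and k :: nat and u :: "(nat, nat) gstring" and i0 l0 :: nat
  assumes Lc_gs: "\<forall>c. \<forall>w\<in>Lc c. is_gs UNIV T w"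
    and Lc_det: "\<And>c. atom_deterministic (Lc c)"
    and Le_det: "atom_deterministic Le"
    and tangle: "\<And>xs. xs \<in> paths k i0 \<Longrightarrow> u @ lk_word i0 xs \<in> composite Lc T ab Le"
    and l0: "l0 \<in> {1..k}" "l0 \<noteq> i0"
begin

abbreviation L :: "(nat, nat) glang" where
  "L \<equiv> composite Lc T ab Le"

lemma L_det: "atom_deterministic L"
  using Lc_det Le_det by (rule atom_deterministic_composite)

definition path_word :: "nat list \<Rightarrow> (nat, nat) gstring" where
  "path_word \<rho> = u @ lk_word i0 \<rho>"

definition path_prefix :: "nat list \<Rightarrow> (nat, nat) gstring" where
  "path_prefix \<rho> = u @ butlast (lk_word i0 \<rho>)"

(* Fixing the first index makes all path words start with the same atom. *)
definition rooted :: "nat list \<Rightarrow> bool" where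
  "rooted \<rho> \<longleftrightarrow> \<rho> \<in> paths k i0 \<and> hd \<rho> = l0"

definition start :: "nat set" where
  "start = atom_of (hd (path_word [l0]))"

definition factors :: "nat list \<Rightarrow> ('c, nat, nat) calls \<Rightarrow> bool" where
  "factors \<rho> cs \<longleftrightarrow> calls_valid Lc start cs \<and> calls_pattern ab start cs \<in> Le \<and> calls_word start cs = path_word \<rho>"

lemma rooted_not_Nil: "rooted \<rho> \<Longrightarrow> \<rho> \<noteq> []"
  unfolding rooted_def using paths_not_Nil by blast

lemma rooted_l0: "rooted [l0]"
  unfolding rooted_def using l0 by simp

lemma rooted_append: "rooted \<rho> \<Longrightarrow> \<rho> @ \<sigma> \<in> paths k i0 \<Longrightarrow> rooted (\<rho> @ \<sigma>)"
  unfolding rooted_def using paths_not_Nil by auto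

lemma rooted_snoc: "rooted \<rho> \<Longrightarrow> l \<in> {1..k} \<Longrightarrow> l \<noteq> last \<rho> \<Longrightarrow> rooted (\<rho> @ [l])"
  unfolding rooted_def using paths_snoc paths_not_Nil by auto

lemma path_word_eq: "\<rho> \<noteq> [] \<Longrightarrow> path_word \<rho> = path_prefix \<rho> @ [GAt {last \<rho>}]"
  unfolding path_word_def path_prefix_def using lk_word_last[of \<rho> i0] by simp

lemma path_word_snoc: "\<rho> \<noteq> [] \<Longrightarrow> path_word (\<rho> @ [l]) = path_prefix \<rho> @ [GAt {l}, GAct (last \<rho>), GAt {l}]"
  unfolding path_word_def path_prefix_def using lk_word_snoc[of \<rho> i0 l] by simp

lemma path_prefix_snoc: "\<rho> \<noteq> [] \<Longrightarrow> path_prefix (\<rho> @ [l]) = path_prefix \<rho> @ [GAt {l}, GAct (last \<rho>)]"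
  unfolding path_prefix_def using lk_word_snoc[of \<rho> i0 l] by (simp add: butlast_append)

lemma path_prefix_ends_with_action: "\<rho> \<noteq> [] \<Longrightarrow> \<exists>z q. path_prefix \<rho> = z @ [GAct q]"
proof -
  assume "\<rho> \<noteq> []"
  then obtain z q where "butlast (lk_word i0 \<rho>) = z @ [GAct q]"
    using lk_word_butlast_ends_with_action by blast
  then show ?thesis
    unfolding path_prefix_def by (intro exI[of _ "u @ z"] exI[of _ q]) simp
qed

lemma path_word_append:
  assumes "\<rho> \<noteq> []"
  shows "\<exists>x. path_word (\<rho> @ \<sigma>) = path_prefix \<rho> @ x"
proof (cases "\<sigma> = []")
  case True
  then show ?thesis
    using path_word_eq[OF assms] by simp
next
  case False
  then show ?thesis
    unfolding path_word_def path_prefix_def using lk_word_append[OF assms False, of i0] by simp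
qed

lemma path_word_hd: "rooted \<rho> \<Longrightarrow> hd (path_word \<rho>) = hd (path_word [l0])"
proof (cases "u = []")
  case True
  assume "rooted \<rho>"
  then have "\<rho> \<noteq> []" "hd \<rho> = l0"
    using rooted_not_Nil unfolding rooted_def by simp_all
  then show ?thesis
    unfolding path_word_def using True lk_word_hd[of \<rho> i0] by simp
qed (simp add: path_word_def)

lemma factors_exist: "rooted \<rho> \<Longrightarrow> start \<subseteq> T \<and> (\<exists>cs. factors \<rho> cs)"
proof -
  assume \<rho>: "rooted \<rho>"
  then have "path_word \<rho> \<in> L"
    using tangle unfolding rooted_def path_word_def by blast
  then obtain b cs where bcs: "b \<subseteq> T" "calls_valid Lc b cs" "calls_pattern ab b cs \<in> Le"
    "path_word \<rho> = calls_word b cs"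
    by (rule composite_memE)
  then have "hd (path_word \<rho>) = GAt b"
    using calls_word_hd[OF bcs(2)] by auto
  then have "b = start"
    unfolding start_def using path_word_hd[OF \<rho>] by simp
  then show ?thesis
    using bcs unfolding factors_def by auto
qed

lemma start_subset: "start \<subseteq> T"
  using factors_exist[OF rooted_l0] by blast

lemma calls_word_start_in_L:
  "calls_valid Lc start cs \<Longrightarrow> calls_pattern ab start cs \<in> Le \<Longrightarrow> calls_word start cs \<in> L"
  by (rule composite_memI[OF start_subset])

(* In every factorization of every continuation of rho, the last action of path_prefix rho is
   read by the call c following the calls P, and this call has read v up to there. *)
definition inside :: "nat list \<Rightarrow> ('c, nat, nat) calls \<Rightarrow> 'c \<Rightarrow> (nat, nat) gstring \<Rightarrow> bool" where
  "inside \<rho> P c v \<longleftrightarrow> path_prefix \<rho> = calls_prefix start P @ v \<and> v \<noteq> [] \<and>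
     (\<forall>\<sigma> cs. \<rho> @ \<sigma> \<in> paths k i0 \<longrightarrow> factors (\<rho> @ \<sigma>) cs \<longrightarrow> (\<exists>y R. cs = P @ (c, v @ y) # R \<and> y \<noteq> []))"

lemma insideD:
  "inside \<rho> P c v \<Longrightarrow> \<rho> @ \<sigma> \<in> paths k i0 \<Longrightarrow> factors (\<rho> @ \<sigma>) cs \<Longrightarrow> \<exists>y R. cs = P @ (c, v @ y) # R \<and> y \<noteq> []"
  unfolding inside_def by blast

lemma inside_factors: "inside \<rho> P c v \<Longrightarrow> rooted \<rho> \<Longrightarrow> factors \<rho> cs \<Longrightarrow> \<exists>y R. cs = P @ (c, v @ y) # R \<and> y \<noteq> []"
  using insideD[of \<rho> P c v "[]" cs] unfolding rooted_def by simp

lemma inside_exists: "rooted \<rho> \<Longrightarrow> \<exists>P c v. inside \<rho> P c v"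
proof -
  assume \<rho>: "rooted \<rho>"
  then have ne: "\<rho> \<noteq> []" by (rule rooted_not_Nil)
  obtain cs where cs: "calls_valid Lc start cs" "calls_pattern ab start cs \<in> Le"
    "calls_word start cs = path_word \<rho>"
    using factors_exist[OF \<rho>] unfolding factors_def by blast
  obtain z q where q: "path_prefix \<rho> = z @ [GAct q]"
    using path_prefix_ends_with_action[OF ne] by blast
  have "calls_word start cs = path_prefix \<rho> @ [GAt {last \<rho>}]"
    using cs(3) path_word_eq[OF ne] by simp
  moreover have "path_prefix \<rho> \<noteq> []" "last (path_prefix \<rho>) = GAct q"
    using q by simp_all
  ultimately obtain P c v y R where d: "cs = P @ (c, v @ y) # R" "path_prefix \<rho> = calls_prefix start P @ v"
    "v \<noteq> []" "y \<noteq> []"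
    using calls_word_split_at_action[OF cs(1)] by blast
  have "\<exists>y R. cs' = P @ (c, v @ y) # R \<and> y \<noteq> []" if "factors (\<rho> @ \<sigma>) cs'" for \<sigma> cs'
  proof -
    obtain x where "path_word (\<rho> @ \<sigma>) = path_prefix \<rho> @ x"
      using path_word_append[OF ne] by blast
    then have w': "calls_word start cs' = calls_prefix start P @ v @ x"
      using d(2) that unfolding factors_def by simp
    have v': "calls_valid Lc start cs'" "calls_pattern ab start cs' \<in> Le"
      using that unfolding factors_def by simp_all
    have v: "calls_valid Lc start (P @ (c, v @ y) # R)" "calls_pattern ab start (P @ (c, v @ y) # R) \<in> Le"
      using cs d(1) by simp_all
    show ?thesis
      by (rule accepted_calls_prefix_determines_call[OF Lc_det Le_det v d(3,4) v' w'])
  qed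
  then show ?thesis
    unfolding inside_def using d(2,3) by (intro exI[of _ P] exI[of _ c] exI[of _ v]) blast
qed

lemma inside_final_call:
  assumes ins: "inside \<rho> P c v" and \<rho>: "rooted \<rho>" and cs: "factors \<rho> cs"
  shows "\<exists>R. cs = P @ (c, v @ [GAt {last \<rho>}]) # R \<and> calls_word {last \<rho>} R = [GAt {last \<rho>}]"
proof -
  obtain y R where yR: "cs = P @ (c, v @ y) # R" "y \<noteq> []"
    using inside_factors[OF ins \<rho> cs] by blast
  have valid: "calls_valid Lc start (P @ (c, v @ y) # R)"
    using cs yR unfolding factors_def by simp
  have tail: "last y = GAt (last_atom y)" "calls_valid Lc (last_atom y) R"
    using calls_valid_call_tail[OF valid yR(2)] by auto
  obtain r where r: "calls_word (last_atom y) R = GAt (last_atom y) # r"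
    using calls_word_hd[OF tail(2)] by blast
  have "calls_prefix start P @ v @ butlast y @ calls_word (last_atom y) R = path_word \<rho>"
    using calls_word_split[OF yR(2), of start P c v R] cs yR(1) unfolding factors_def by simp
  also have "\<dots> = calls_prefix start P @ v @ [GAt {last \<rho>}]"
    using path_word_eq[OF rooted_not_Nil[OF \<rho>]] ins unfolding inside_def by simp
  finally have "butlast y @ GAt (last_atom y) # r = [GAt {last \<rho>}]"
    using r by simp
  then have "butlast y = []" "r = []" "last_atom y = {last \<rho>}"
    by (cases "butlast y"; simp)+
  moreover have "y = butlast y @ [last y]"
    using yR(2) by simp
  ultimately show ?thesis
    using yR(1) r tail(1) by auto
qed

(* Appending l ends the call c with the atom alpha_l; some tests follow, and then a call c'
   starts by reading the action last rho. *)
definition exits :: "nat list \<Rightarrow> ('c, nat, nat) calls \<Rightarrow> 'c \<Rightarrow> (nat, nat) gstring \<Rightarrow> nat \<Rightarrow> bool" where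
  "exits \<rho> P c v l \<longleftrightarrow> (\<exists>ts c'.
     inside (\<rho> @ [l]) (P @ (c, v @ [GAt {l}]) # test_calls {l} ts) c' [GAt {l}, GAct (last \<rho>)])"

lemma calls_prefix_exit: "calls_prefix b (P @ (c, v @ [GAt g]) # test_calls g ts) = calls_prefix b P @ v"
  by (simp add: calls_prefix_append butlast_append)

lemma factors_snoc_tail:
  assumes \<rho>: "rooted \<rho>" and l: "l \<in> {1..k}" "l \<noteq> last \<rho>" and ins: "inside \<rho> P c v"
    and cs: "factors (\<rho> @ [l]) cs"
  obtains y R where "cs = P @ (c, v @ y) # R" "odd (length y)" "last y = GAt (last_atom y)"
    "calls_valid Lc (last_atom y) R" "butlast y @ calls_word (last_atom y) R = [GAt {l}, GAct (last \<rho>), GAt {l}]"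
proof -
  have ne: "\<rho> \<noteq> []" using rooted_not_Nil[OF \<rho>] .
  have "\<rho> @ [l] \<in> paths k i0"
    using rooted_snoc[OF \<rho> l] unfolding rooted_def by simp
  then obtain y R where yR: "cs = P @ (c, v @ y) # R" "y \<noteq> []"
    using insideD[OF ins _ cs] by blast
  have valid: "calls_valid Lc start (P @ (c, v @ y) # R)"
    using cs yR unfolding factors_def by simp
  have pv: "path_prefix \<rho> = calls_prefix start P @ v" "v \<noteq> []"
    using ins unfolding inside_def by simp_all
  have "calls_prefix start P @ v @ butlast y @ calls_word (last_atom y) R = path_word (\<rho> @ [l])"
    using calls_word_split[OF yR(2), of start P c v R] cs yR(1) unfolding factors_def by simp
  also have "\<dots> = calls_prefix start P @ v @ [GAt {l}, GAct (last \<rho>), GAt {l}]"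
    using path_word_snoc[OF ne] pv by simp
  finally have "butlast y @ calls_word (last_atom y) R = [GAt {l}, GAct (last \<rho>), GAt {l}]"
    by simp
  moreover obtain z q where "path_prefix \<rho> = z @ [GAct q]"
    using path_prefix_ends_with_action[OF ne] by blast
  then have "last v = GAct q"
    using pv by (metis last_appendR last_snoc)
  then have "odd (length y)"
    using calls_valid_call_odd_tail[OF Lc_gs valid pv(2)] by blast
  ultimately show ?thesis
    using that yR(1) calls_valid_call_tail[OF valid yR(2)] by blast
qed

lemma factors_snoc_cases:
  assumes \<rho>: "rooted \<rho>" and l: "l \<in> {1..k}" "l \<noteq> last \<rho>" and ins: "inside \<rho> P c v"
    and cs: "factors (\<rho> @ [l]) cs"
  shows "(\<exists>y R. cs = P @ (c, (v @ [GAt {l}, GAct (last \<rho>)]) @ y) # R \<and> y \<noteq> []) \<or>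
    (\<exists>ts c' w R. cs = (P @ (c, v @ [GAt {l}]) # test_calls {l} ts) @ (c', [GAt {l}, GAct (last \<rho>)] @ w) # R
       \<and> w \<noteq> [])"
proof -
  obtain y R where yR: "cs = P @ (c, v @ y) # R" "odd (length y)" "last y = GAt (last_atom y)"
    "calls_valid Lc (last_atom y) R" and e: "butlast y @ calls_word (last_atom y) R = [GAt {l}, GAct (last \<rho>), GAt {l}]"
    by (rule factors_snoc_tail[OF assms])
  obtain r where r: "calls_word (last_atom y) R = GAt (last_atom y) # r"
    using calls_word_hd[OF yR(4)] by blast
  have "length (butlast y) \<le> 2" "even (length (butlast y))"
    using arg_cong[OF e, of length] yR(2) r by simp_all
  then consider "butlast y = []" | "length (butlast y) = 2"
    by (metis One_nat_def dvd_refl even_Suc le_SucE le_zero_eq length_0_conv numeral_2_eq_2 odd_one)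
  then show ?thesis
  proof cases
    case 1
    moreover have "y \<noteq> []"
      using yR(2) by auto
    ultimately have "y = [last y]" and "last_atom y = {l}"
      using e r by (metis append_butlast_last_id append_Nil, simp)
    then have y: "y = [GAt {l}]"
      using yR(3) by simp
    then have "calls_word {l} R = GAt {l} # GAct (last \<rho>) # [GAt {l}]"
      using e 1 by simp
    then obtain ts c' w R' where "R = test_calls {l} ts @ (c', GAt {l} # GAct (last \<rho>) # w) # R'" "w \<noteq> []"
      using calls_word_first_action[OF Lc_gs] yR(4) \<open>last_atom y = {l}\<close> by metis
    then show ?thesis
      using yR(1) y by auto
  next
    case 2
    have "butlast y @ GAt (last_atom y) # r = [GAt {l}, GAct (last \<rho>), GAt {l}]"
      using e r by simp
    moreover obtain s1 s2 where "butlast y = [s1, s2]"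
      using 2 by (metis length_0_conv length_Suc_conv numeral_2_eq_2)
    ultimately have "butlast y = [GAt {l}, GAct (last \<rho>)]"
      by simp
    then have "y = [GAt {l}, GAct (last \<rho>)] @ [last y]"
      using yR(2) by (metis append_butlast_last_id odd_pos length_greater_0_conv)
    then show ?thesis
      using yR(1) by (metis append.assoc append_Cons append_Nil not_Cons_self2)
  qed
qed

lemma inside_snoc:
  assumes \<rho>: "rooted \<rho>" and l: "l \<in> {1..k}" "l \<noteq> last \<rho>" and ins: "inside \<rho> P c v"
  shows "(\<exists>v'. inside (\<rho> @ [l]) P c v') \<or> exits \<rho> P c v l"
proof -
  have \<rho>': "rooted (\<rho> @ [l])"
    using rooted_snoc[OF \<rho> l] .
  obtain P' c' v' where ins': "inside (\<rho> @ [l]) P' c' v'"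
    using inside_exists[OF \<rho>'] by blast
  obtain cs where cs: "factors (\<rho> @ [l]) cs"
    using factors_exist[OF \<rho>'] by blast
  obtain y' R' where cs': "cs = P' @ (c', v' @ y') # R'" "y' \<noteq> []"
    using inside_factors[OF ins' \<rho>' cs] by blast
  have "calls_prefix start P' @ v' = path_prefix (\<rho> @ [l])" "v' \<noteq> []"
    using ins' unfolding inside_def by simp_all
  moreover have "path_prefix (\<rho> @ [l]) = calls_prefix start P @ v @ [GAt {l}, GAct (last \<rho>)]"
    using path_prefix_snoc[OF rooted_not_Nil[OF \<rho>]] ins unfolding inside_def by simp
  ultimately have pre': "calls_prefix start P' @ v' = calls_prefix start P @ v @ [GAt {l}, GAct (last \<rho>)]"
    "v' \<noteq> []"
    by simp_all
  from factors_snoc_cases[OF \<rho> l ins cs] show ?thesis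
  proof (elim disjE exE conjE)
    fix y R assume "cs = P @ (c, (v @ [GAt {l}, GAct (last \<rho>)]) @ y) # R" "y \<noteq> []"
    then have "P = P' \<and> c = c' \<and> v @ [GAt {l}, GAct (last \<rho>)] = v'"
      using calls_split_unique[of P c _ y R P' c' v' y' R' start] cs' pre' by simp
    then show ?thesis
      using ins' by blast
  next
    fix ts c'' w R
    assume "cs = (P @ (c, v @ [GAt {l}]) # test_calls {l} ts) @ (c'', [GAt {l}, GAct (last \<rho>)] @ w) # R"
      "w \<noteq> []"
    then have eq: "(P @ (c, v @ [GAt {l}]) # test_calls {l} ts) @ (c'', [GAt {l}, GAct (last \<rho>)] @ w) # R =
        P' @ (c', v' @ y') # R'"
      using cs' by simp
    have eq_pre: "calls_prefix start (P @ (c, v @ [GAt {l}]) # test_calls {l} ts) @ [GAt {l}, GAct (last \<rho>)] =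
        calls_prefix start P' @ v'"
      using pre' calls_prefix_exit by simp
    have "P @ (c, v @ [GAt {l}]) # test_calls {l} ts = P' \<and> c'' = c' \<and> [GAt {l}, GAct (last \<rho>)] = v'"
      by (rule calls_split_unique[OF eq eq_pre _ pre'(2) \<open>w \<noteq> []\<close> cs'(2)]) simp
    then show ?thesis
      using ins' unfolding exits_def by blast
  qed
qed

lemma exits_factors:
  assumes \<rho>: "rooted \<rho>" and l: "l \<in> {1..k}" "l \<noteq> last \<rho>" and ins: "inside \<rho> P c v"
    and ex: "exits \<rho> P c v l" and cs: "factors (\<rho> @ [l]) cs"
  shows "\<exists>R. cs = P @ (c, v @ [GAt {l}]) # R \<and> calls_word {l} R = [GAt {l}, GAct (last \<rho>), GAt {l}]"
proof -
  obtain ts c' where ins': "inside (\<rho> @ [l]) (P @ (c, v @ [GAt {l}]) # test_calls {l} ts) c' [GAt {l}, GAct (last \<rho>)]"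
    using ex unfolding exits_def by blast
  obtain y R0 where "cs = (P @ (c, v @ [GAt {l}]) # test_calls {l} ts) @ (c', [GAt {l}, GAct (last \<rho>)] @ y) # R0"
    using inside_factors[OF ins' rooted_snoc[OF \<rho> l] cs] by blast
  then obtain R where R: "cs = P @ (c, v @ [GAt {l}]) # R"
    by simp
  have "calls_prefix start P @ v @ calls_word {l} R = path_word (\<rho> @ [l])"
    using cs R calls_word_call[of start P c "v @ [GAt {l}]" R] unfolding factors_def by simp
  also have "\<dots> = calls_prefix start P @ v @ [GAt {l}, GAct (last \<rho>), GAt {l}]"
    using path_word_snoc[OF rooted_not_Nil[OF \<rho>]] ins unfolding inside_def by simp
  finally show ?thesis
    using R by simp
qed

lemma path_word_in_L: "rooted \<rho> \<Longrightarrow> path_word \<rho> \<in> L"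
  unfolding rooted_def path_word_def using tangle by blast

lemma swap_call_tails:
  assumes "factors \<rho>1 (P1 @ (c, v1 @ [GAt g]) # R1)" "factors \<rho>2 (P2 @ (c, v2 @ [GAt g]) # R2)"
    "calls_pattern ab start P1 = calls_pattern ab start P2"
  shows "calls_prefix start P1 @ v1 @ calls_word g R2 \<in> L"
proof -
  have "calls_word start (P1 @ (c, v1 @ [GAt g]) # R2) \<in> L"
    using assms start_subset unfolding factors_def by (intro composite_swap_tail) auto
  then show ?thesis
    by (simp add: calls_word_call)
qed

lemma stay_exit_conflict:
  assumes \<rho>1: "rooted \<rho>1" "inside \<rho>1 P c v1" "last \<rho>1 = l"
    and \<rho>2: "rooted \<rho>2" "inside \<rho>2 P c v2" "l \<in> {1..k}" "l \<noteq> last \<rho>2" "exits \<rho>2 P c v2 l"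
  shows False
proof -
  have \<rho>2': "rooted (\<rho>2 @ [l])"
    using rooted_snoc[OF \<rho>2(1,3,4)] .
  obtain cs1 where "factors \<rho>1 cs1"
    using factors_exist[OF \<rho>1(1)] by blast
  then obtain R1 where R1: "factors \<rho>1 (P @ (c, v1 @ [GAt {l}]) # R1)" "calls_word {l} R1 = [GAt {l}]"
    using inside_final_call[OF \<rho>1(2,1)] \<rho>1(3) by blast
  obtain cs2 where "factors (\<rho>2 @ [l]) cs2"
    using factors_exist[OF \<rho>2'] by blast
  then obtain R2 where R2: "factors (\<rho>2 @ [l]) (P @ (c, v2 @ [GAt {l}]) # R2)"
    using exits_factors[OF \<rho>2(1,3,4,2,5)] by blast
  have "calls_prefix start P @ v2 @ calls_word {l} R1 \<in> L"
    using swap_call_tails[OF R2 R1(1) refl] .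
  then have "path_prefix \<rho>2 @ [GAt {l}] \<in> L"
    using R1(2) \<rho>2(2) unfolding inside_def by simp
  moreover have "(path_prefix \<rho>2 @ [GAt {l}]) @ [GAct (last \<rho>2), GAt {l}] \<in> L"
    using path_word_in_L[OF \<rho>2'] path_word_snoc[OF rooted_not_Nil[OF \<rho>2(1)]] by simp
  ultimately have "[GAct (last \<rho>2), GAt {l}] = []"
    by (rule atom_deterministic_no_extension[OF L_det])
  then show False by simp
qed

lemma exit_exit_same_last:
  assumes \<rho>1: "rooted \<rho>1" "inside \<rho>1 P c v1" "l \<noteq> last \<rho>1" "exits \<rho>1 P c v1 l"
    and \<rho>2: "rooted \<rho>2" "inside \<rho>2 P c v2" "l \<noteq> last \<rho>2" "exits \<rho>2 P c v2 l"
    and l: "l \<in> {1..k}"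
  shows "last \<rho>1 = last \<rho>2"
proof -
  obtain cs1 where "factors (\<rho>1 @ [l]) cs1"
    using factors_exist[OF rooted_snoc[OF \<rho>1(1) l \<rho>1(3)]] by blast
  then obtain R1 where R1: "factors (\<rho>1 @ [l]) (P @ (c, v1 @ [GAt {l}]) # R1)"
    using exits_factors[OF \<rho>1(1) l \<rho>1(3,2,4)] by blast
  obtain cs2 where "factors (\<rho>2 @ [l]) cs2"
    using factors_exist[OF rooted_snoc[OF \<rho>2(1) l \<rho>2(3)]] by blast
  then obtain R2 where R2: "factors (\<rho>2 @ [l]) (P @ (c, v2 @ [GAt {l}]) # R2)"
    "calls_word {l} R2 = [GAt {l}, GAct (last \<rho>2), GAt {l}]"
    using exits_factors[OF \<rho>2(1) l \<rho>2(3,2,4)] by blast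
  have "calls_prefix start P @ v1 @ calls_word {l} R2 \<in> L"
    using swap_call_tails[OF R1 R2(1) refl] .
  then have "(path_prefix \<rho>1 @ [GAt {l}]) @ GAct (last \<rho>2) # [GAt {l}] \<in> L"
    using R2(2) \<rho>1(2) unfolding inside_def by simp
  moreover have "(path_prefix \<rho>1 @ [GAt {l}]) @ GAct (last \<rho>1) # [GAt {l}] \<in> L"
    using path_word_in_L[OF rooted_snoc[OF \<rho>1(1) l \<rho>1(3)]] path_word_snoc[OF rooted_not_Nil[OF \<rho>1(1)]]
    by simp
  ultimately show ?thesis
    using atom_deterministic_same_action[OF L_det] by metis
qed

lemma exit_determines_last:
  assumes \<rho>: "rooted \<rho>" "inside \<rho> P c v" "l \<in> {1..k}" "l \<noteq> last \<rho>" "exits \<rho> P c v l"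
    and \<kappa>: "rooted \<kappa>" "inside \<kappa> P c w"
  shows "last \<kappa> = last \<rho>"
proof (cases "last \<kappa> = l")
  case True
  then show ?thesis
    using stay_exit_conflict[OF \<kappa> True \<rho>(1,2,3,4,5)] by blast
next
  case False
  from inside_snoc[OF \<kappa>(1) \<rho>(3) False[symmetric] \<kappa>(2)] show ?thesis
  proof (elim disjE exE)
    fix w' assume "inside (\<kappa> @ [l]) P c w'"
    from stay_exit_conflict[OF rooted_snoc[OF \<kappa>(1) \<rho>(3) False[symmetric]] this _ \<rho>(1,2,3,4,5)]
    show ?thesis by simp
  next
    assume "exits \<kappa> P c w l"
    then show ?thesis
      using exit_exit_same_last[OF \<kappa> False[symmetric] _ \<rho>(1,2,4,5,3)] by blast
  qed
qed

lemma first_exit: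
  assumes \<pi>: "rooted \<pi>" "inside \<pi> P c v"
  shows "\<pi> @ \<sigma> \<in> paths k i0 \<Longrightarrow> \<nexists>v'. inside (\<pi> @ \<sigma>) P c v' \<Longrightarrow>
    \<exists>\<rho> v1 l. rooted \<rho> \<and> inside \<rho> P c v1 \<and> l \<in> {1..k} \<and> l \<noteq> last \<rho> \<and> exits \<rho> P c v1 l"
proof (induction \<sigma> rule: rev_induct)
  case Nil
  then show ?case using \<pi>(2) by simp
next
  case (snoc l \<sigma>)
  have "\<pi> @ \<sigma> \<in> paths k i0" "[l] \<in> paths k (last (\<pi> @ \<sigma>))"
    using paths_append_iff[of "\<pi> @ \<sigma>" "[l]"] snoc.prems(1) rooted_not_Nil[OF \<pi>(1)] by simp_all
  then have \<rho>: "rooted (\<pi> @ \<sigma>)" and l: "l \<in> {1..k}" "l \<noteq> last (\<pi> @ \<sigma>)"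
    using rooted_append[OF \<pi>(1)] by simp_all
  show ?case
  proof (cases "\<exists>v'. inside (\<pi> @ \<sigma>) P c v'")
    case True
    then obtain v1 where v1: "inside (\<pi> @ \<sigma>) P c v1" by blast
    have "\<nexists>v'. inside ((\<pi> @ \<sigma>) @ [l]) P c v'"
      using snoc.prems(2) by simp
    then have "exits (\<pi> @ \<sigma>) P c v1 l"
      using inside_snoc[OF \<rho> l v1] by blast
    then show ?thesis
      using \<rho> v1 l by blast
  next
    case False
    then show ?thesis
      using snoc.IH \<open>\<pi> @ \<sigma> \<in> paths k i0\<close> by blast
  qed
qed

lemma exits_everywhere:
  assumes \<pi>: "rooted \<pi>" "inside \<pi> P c v" and \<sigma>: "\<pi> @ \<sigma> \<in> paths k i0" "\<nexists>v'. inside (\<pi> @ \<sigma>) P c v'"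
    and l: "l \<in> {1..k}" "l \<noteq> last \<pi>"
  shows "exits \<pi> P c v l"
proof (rule ccontr)
  obtain \<rho> v1 l' where \<rho>: "rooted \<rho>" "inside \<rho> P c v1" "l' \<in> {1..k}" "l' \<noteq> last \<rho>" "exits \<rho> P c v1 l'"
    using first_exit[OF \<pi> \<sigma>] by blast
  have "last \<pi> = last \<rho>"
    using exit_determines_last[OF \<rho> \<pi>] .
  assume "\<not> exits \<pi> P c v l"
  then obtain v' where "inside (\<pi> @ [l]) P c v'"
    using inside_snoc[OF \<pi>(1) l \<pi>(2)] by blast
  then have "last (\<pi> @ [l]) = last \<rho>"
    using exit_determines_last[OF \<rho> rooted_snoc[OF \<pi>(1) l]] by blast
  then show False
    using l(2) \<open>last \<pi> = last \<rho>\<close> by simp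
qed

lemma call_tangled:
  assumes \<pi>: "rooted \<pi>" "inside \<pi> P c v"
    and stays: "\<And>\<sigma>. \<pi> @ \<sigma> \<in> paths k i0 \<Longrightarrow> \<exists>v'. inside (\<pi> @ \<sigma>) P c v'"
  shows "tangled k (Lc c)"
  unfolding tangled_def
proof (intro exI[of _ v] exI[of _ "last \<pi>"] ballI)
  fix xs assume xs: "xs \<in> paths k (last \<pi>)"
  have ne: "\<pi> \<noteq> []" "xs \<noteq> []"
    using rooted_not_Nil[OF \<pi>(1)] paths_not_Nil[OF xs] by simp_all
  have "\<pi> @ xs \<in> paths k i0"
    using paths_append_iff[OF ne] xs \<pi>(1) unfolding rooted_def by simp
  then have \<rho>: "rooted (\<pi> @ xs)" and "\<exists>v'. inside (\<pi> @ xs) P c v'"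
    using rooted_append[OF \<pi>(1)] stays by simp_all
  then obtain v' where v': "inside (\<pi> @ xs) P c v'" by blast
  obtain cs where "factors (\<pi> @ xs) cs"
    using factors_exist[OF \<rho>] by blast
  then obtain R where "factors (\<pi> @ xs) (P @ (c, v' @ [GAt {last xs}]) # R)"
    using inside_final_call[OF v' \<rho>] ne(2) by auto
  then have in_Lc: "v' @ [GAt {last xs}] \<in> Lc c"
    unfolding factors_def by (simp add: calls_valid_append)
  have "path_prefix (\<pi> @ xs) = path_prefix \<pi> @ butlast (lk_word (last \<pi>) xs)"
    unfolding path_prefix_def using lk_word_append[OF ne, of i0] lk_word_not_Nil[OF ne(2)]
    by (simp add: butlast_append)
  then have "v' = v @ butlast (lk_word (last \<pi>) xs)"
    using v' \<pi>(2) unfolding inside_def by simp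
  then show "v @ lk_word (last \<pi>) xs \<in> Lc c"
    using in_Lc lk_word_last[OF ne(2), of "last \<pi>"] by simp
qed

lemma untangled_exits:
  assumes untangled: "\<And>c. \<not> tangled k (Lc c)" and \<pi>: "rooted \<pi>" "inside \<pi> P c v"
    and l: "l \<in> {1..k}" "l \<noteq> last \<pi>"
  shows "exits \<pi> P c v l"
proof -
  obtain \<sigma> where "\<pi> @ \<sigma> \<in> paths k i0" "\<nexists>v'. inside (\<pi> @ \<sigma>) P c v'"
    using call_tangled[OF \<pi>] untangled by blast
  then show ?thesis
    using exits_everywhere[OF \<pi> _ _ l] by blast
qed

lemma untangled_root_exits:
  assumes untangled: "\<And>c. \<not> tangled k (Lc c)"
  obtains P c v ts c' where "\<And>l. l \<in> {1..k} \<Longrightarrow> l \<noteq> l0 \<Longrightarrow>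
    inside [l0, l] (P @ (c, v @ [GAt {l}]) # test_calls {l} (ts l)) (c' l) [GAt {l}, GAct l0]"
proof -
  obtain P c v where ins: "inside [l0] P c v"
    using inside_exists[OF rooted_l0] by blast
  have "\<forall>l\<in>{1..k} - {l0}. \<exists>ts c'.
      inside [l0, l] (P @ (c, v @ [GAt {l}]) # test_calls {l} ts) c' [GAt {l}, GAct l0]"
    using untangled_exits[OF untangled rooted_l0 ins] unfolding exits_def by simp
  then obtain ts c' where "\<forall>l\<in>{1..k} - {l0}.
      inside [l0, l] (P @ (c, v @ [GAt {l}]) # test_calls {l} (ts l)) (c' l) [GAt {l}, GAct l0]"
    by metis
  then show ?thesis
    using that by blast
qed

lemma second_exit_factors:
  assumes untangled: "\<And>c. \<not> tangled k (Lc c)"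
    and l: "l \<in> {1..k}" "l \<noteq> l0" and ins: "inside [l0, l] P c [GAt {l}, GAct l0]"
    and l': "l' \<in> {1..k}" "l' \<noteq> l"
  shows "\<exists>R. factors [l0, l, l'] (P @ (c, [GAt {l}, GAct l0, GAt {l'}]) # R) \<and>
    calls_word {l'} R = [GAt {l'}, GAct l, GAt {l'}]"
proof -
  have \<rho>: "rooted [l0, l]"
    using rooted_snoc[OF rooted_l0 l(1)] l(2) by simp
  then have ex: "exits [l0, l] P c [GAt {l}, GAct l0] l'"
    using untangled_exits[OF untangled \<rho> ins] l' by simp
  obtain cs where "factors ([l0, l] @ [l']) cs"
    using factors_exist[OF rooted_snoc[OF \<rho> l'(1)]] l'(2) by auto
  then show ?thesis
    using exits_factors[OF \<rho> l'(1) _ ins ex] l'(2) by auto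
qed

lemma untangled_exit_call_mem:
  assumes untangled: "\<And>c. \<not> tangled k (Lc c)" and C: "\<forall>w\<in>Le. \<forall>c. GAct c \<in> set w \<longrightarrow> c \<in> C"
    and k: "2 \<le> k" and l: "l \<in> {1..k}" "l \<noteq> l0" and ins: "inside [l0, l] P c [GAt {l}, GAct l0]"
  shows "c \<in> C"
proof -
  define l' where "l' = (if l = 1 then 2 else 1 :: nat)"
  have "l' \<in> {1..k}" "l' \<noteq> l"
    using k unfolding l'_def by auto
  then obtain R where "calls_pattern ab start (P @ (c, [GAt {l}, GAct l0, GAt {l'}]) # R) \<in> Le"
    using second_exit_factors[OF untangled l ins] unfolding factors_def by blast
  moreover have "GAct c \<in> set (calls_pattern ab start (P @ (c, [GAt {l}, GAct l0, GAt {l'}]) # R))"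
    by (rule calls_pattern_action[of _ "[GAt {l}, GAct l0, GAt {l'}]"]) simp
  ultimately show ?thesis
    using C by blast
qed

(* Exits with equal labels read the same tests, so their tails can be exchanged. *)
lemma exit_collision:
  assumes ins1: "inside [l0, l1] (P @ (c, v @ [GAt {l1}]) # test_calls {l1} ts1) c' [GAt {l1}, GAct l0]"
    and f1: "factors [l0, l1, l'] ((P @ (c, v @ [GAt {l1}]) # test_calls {l1} ts1) @ (c', [GAt {l1}, GAct l0, GAt {l'}]) # R1)"
    and f2: "factors [l0, l2, l'] ((P @ (c, v @ [GAt {l2}]) # test_calls {l2} ts2) @ (c', [GAt {l2}, GAct l0, GAt {l'}]) # R2)"
    and R2: "calls_word {l'} R2 = [GAt {l'}, GAct l2, GAt {l'}]"
    and ab: "ab {l1} = ab {l2}"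
  shows "l1 = l2"
proof -
  define E where "E = butlast (calls_pattern ab start P) @ [GAt (ab (calls_end start P)), GAct c]"
  have pattern: "calls_pattern ab start ((P @ (c, v @ [GAt g]) # test_calls g ts) @ (c', w) # R) =
      E @ concat (map (\<lambda>t. [GAt (ab g), GAct t]) (ts @ [c'])) @ calls_pattern ab (last_atom w) R" for g ts w R
    unfolding E_def by (simp add: calls_pattern_append)
  have last_atom_w: "last_atom [GAt a, GAct l0, GAt {l'}] = {l'}" for a
    by (simp add: last_atom_def)
  obtain r1 r2 where r: "calls_pattern ab {l'} R1 = GAt (ab {l'}) # r1" "calls_pattern ab {l'} R2 = GAt (ab {l'}) # r2"
    using calls_pattern_hd by metis
  have "E @ concat (map (\<lambda>t. [GAt (ab {l1}), GAct t]) (ts1 @ [c'])) @ GAt (ab {l'}) # r1 \<in> Le"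
    using f1 unfolding factors_def pattern last_atom_w r(1) by blast
  moreover have "E @ concat (map (\<lambda>t. [GAt (ab {l1}), GAct t]) (ts2 @ [c'])) @ GAt (ab {l'}) # r2 \<in> Le"
    using f2 unfolding factors_def pattern last_atom_w r(2) ab by blast
  moreover have "c' \<notin> set ts1"
    by (rule test_calls_fresh[OF Lc_det conjunct1[OF f1[unfolded factors_def]]]) simp
  moreover have "c' \<notin> set ts2"
    by (rule test_calls_fresh[OF Lc_det conjunct1[OF f2[unfolded factors_def]]]) simp
  ultimately have "ts1 = ts2"
    by (rule test_sequence_determined[OF Le_det])
  then have "calls_pattern ab start (P @ (c, v @ [GAt {l1}]) # test_calls {l1} ts1) =
      calls_pattern ab start (P @ (c, v @ [GAt {l2}]) # test_calls {l2} ts2)"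
    using ab by (simp add: calls_pattern_append)
  moreover have "factors [l0, l1, l'] ((P @ (c, v @ [GAt {l1}]) # test_calls {l1} ts1) @
      (c', [GAt {l1}, GAct l0] @ [GAt {l'}]) # R1)"
    "factors [l0, l2, l'] ((P @ (c, v @ [GAt {l2}]) # test_calls {l2} ts2) @
      (c', [GAt {l2}, GAct l0] @ [GAt {l'}]) # R2)"
    using f1 f2 by simp_all
  ultimately have "calls_prefix start (P @ (c, v @ [GAt {l1}]) # test_calls {l1} ts1) @ [GAt {l1}, GAct l0] @
      calls_word {l'} R2 \<in> L"
    using swap_call_tails by blast
  then have "(path_prefix [l0, l1] @ [GAt {l'}]) @ GAct l2 # [GAt {l'}] \<in> L"
    using ins1 R2 unfolding inside_def by simp
  moreover have "(path_prefix [l0, l1] @ [GAt {l'}]) @ GAct l1 # [GAt {l'}] \<in> L"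
    using f1 path_word_snoc[of "[l0, l1]" l'] unfolding factors_def by (auto dest: calls_word_start_in_L)
  ultimately show ?thesis
    using atom_deterministic_same_action[OF L_det] by metis
qed

theorem some_call_tangled:
  assumes A: "finite A" "range ab \<subseteq> A" and C: "finite C" "\<forall>w\<in>Le. \<forall>c. GAct c \<in> set w \<longrightarrow> c \<in> C"
    and k: "card A * card C + 4 \<le> k"
  shows "\<exists>c. tangled k (Lc c)"
proof (rule ccontr)
  assume "\<nexists>c. tangled k (Lc c)"
  then have untangled: "\<And>c. \<not> tangled k (Lc c)"
    by blast
  obtain P c v ts c' where exit: "\<And>l. l \<in> {1..k} \<Longrightarrow> l \<noteq> l0 \<Longrightarrow>
      inside [l0, l] (P @ (c, v @ [GAt {l}]) # test_calls {l} (ts l)) (c' l) [GAt {l}, GAct l0]"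
    using untangled_root_exits[OF untangled] by blast
  define S where "S = {1..k} - {l0}"
  have "(\<lambda>l. (ab {l}, c' l)) ` S \<subseteq> A \<times> C"
    using A(2) untangled_exit_call_mem[OF untangled C(2) _ _ _ exit] k unfolding S_def by auto
  then have "card ((\<lambda>l. (ab {l}, c' l)) ` S) \<le> card A * card C"
    using card_mono[OF finite_cartesian_product[OF A(1) C(1)]] by (simp add: card_cartesian_product)
  moreover have "card S = k - 1"
    using l0 unfolding S_def by simp
  ultimately have "card ((\<lambda>l. (ab {l}, c' l)) ` S) < card S"
    using k by linarith
  then obtain l1 l2 where l12: "l1 \<in> S" "l2 \<in> S" "l1 \<noteq> l2" "ab {l1} = ab {l2}" "c' l1 = c' l2"
    using pigeonhole unfolding inj_on_def by blast
  have "\<not> {1..k} \<subseteq> set [l0, l1, l2]"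
    using card_mono[of "set [l0, l1, l2]" "{1..k}"] card_length[of "[l0, l1, l2]"] k by auto
  then obtain l' where "l' \<in> {1..k}" "l' \<notin> set [l0, l1, l2]"
    by blast
  then have l': "l' \<in> {1..k}" "l' \<noteq> l1" "l' \<noteq> l2"
    by auto
  obtain R1 where "factors [l0, l1, l'] ((P @ (c, v @ [GAt {l1}]) # test_calls {l1} (ts l1)) @
      (c' l1, [GAt {l1}, GAct l0, GAt {l'}]) # R1)"
    using second_exit_factors[OF untangled _ _ exit] l12(1) l'(1,2) unfolding S_def by fastforce
  moreover obtain R2 where "factors [l0, l2, l'] ((P @ (c, v @ [GAt {l2}]) # test_calls {l2} (ts l2)) @
      (c' l1, [GAt {l2}, GAct l0, GAt {l'}]) # R2)" "calls_word {l'} R2 = [GAt {l'}, GAct l2, GAt {l'}]"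
    using second_exit_factors[OF untangled _ _ exit] l12(2,5) l'(1,3) unfolding S_def by fastforce
  ultimately have "l1 = l2"
    using exit_collision[OF exit] l12(1,4) unfolding S_def by blast
  then show False
    using l12(3) by contradiction
qed

end

lemma composite_not_tangled:
  assumes Lc: "\<And>c. atom_deterministic (Lc c)" "\<And>c. \<not> tangled k (Lc c)" "\<forall>c. \<forall>w\<in>Lc c. is_gs UNIV T w"
    and Le: "atom_deterministic Le"
    and A: "finite A" "range ab \<subseteq> A" and C: "finite C" "\<forall>w\<in>Le. \<forall>c. GAct c \<in> set w \<longrightarrow> c \<in> C"
    and k: "card A * card C + 4 \<le> k"
  shows "\<not> tangled k (composite Lc T ab Le)"
proof
  assume "tangled k (composite Lc T ab Le)"
  then obtain u i0 where tangle: "\<forall>xs\<in>paths k i0. u @ lk_word i0 xs \<in> composite Lc T ab Le"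
    unfolding tangled_def by blast
  define l0 where "l0 = (if i0 = 1 then 2 else 1 :: nat)"
  have "l0 \<in> {1..k}" "l0 \<noteq> i0"
    using k unfolding l0_def by auto
  then interpret tangled_composite Lc T ab Le k u i0 l0
    using Lc(1,3) Le tangle by unfold_locales simp_all
  show False
    using some_call_tangled[OF A C k] Lc(2) by blast
qed

section \<open>Generated languages\<close>

lemma short_lang_not_tangled: "\<forall>w\<in>L. length w \<le> 3 \<Longrightarrow> 2 \<le> k \<Longrightarrow> \<not> tangled k L"
  using tangled_has_long_word by fastforce

lemma op_apply_not_tangled:
  fixes Ls :: "(nat, nat) glang list"
  assumes op: "rcfo (n, m, e)" and Ls: "length Ls = n"
    "\<forall>L\<in>set Ls. atom_deterministic L \<and> \<not> tangled k L \<and> (\<forall>w\<in>L. is_gs S T w)"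
    and k: "2 ^ m * n + 4 \<le> k"
  shows "atom_deterministic (op_apply T (n, m, e) Ls bs) \<and> \<not> tangled k (op_apply T (n, m, e) Ls bs)"
proof -
  define Lc where "Lc c = (if c < n then Ls ! c else {})" for c
  define ab where "ab = test_abstraction {0..<m} ((!) bs)"
  define Le where "Le = langK {0..<m} e"
  have e: "kacts e \<subseteq> {0..<n}" "deterministic Le"
    using op unfolding rcfo_def Le_def by auto
  have Le_det: "atom_deterministic Le"
    using e(2) by (rule deterministic_imp_atom_deterministic)
  have Lc: "atom_deterministic (Lc c) \<and> \<not> tangled k (Lc c) \<and> (\<forall>w\<in>Lc c. is_gs UNIV T w)" for c
  proof (cases "c < n")
    case True
    then have "Ls ! c \<in> set Ls"
      using Ls(1) by simp
    then show ?thesis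
      using Ls(2) True is_gs_mono[of S T _ UNIV] unfolding Lc_def by simp
  next
    case False
    have "\<not> tangled k {}"
      using k by (intro short_lang_not_tangled) simp_all
    then show ?thesis
      using False unfolding Lc_def atom_deterministic_def by simp
  qed
  have Lc_det: "\<And>c. atom_deterministic (Lc c)" and Lc_untangled: "\<And>c. \<not> tangled k (Lc c)"
    and Lc_gs: "\<forall>c. \<forall>w\<in>Lc c. is_gs UNIV T w"
    using Lc by simp_all
  have "range ab \<subseteq> Pow {0..<m}"
    unfolding ab_def test_abstraction_def by blast
  moreover have "\<forall>w\<in>Le. \<forall>c. GAct c \<in> set w \<longrightarrow> c \<in> {0..<n}"
  proof (intro ballI allI impI)
    fix w c assume "w \<in> Le" "GAct c \<in> set w"
    then have "c \<in> kacts e"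
      unfolding Le_def by (rule is_gs_action[OF langK_is_gs])
    then show "c \<in> {0..<n}"
      using e(1) by blast
  qed
  moreover have "card (Pow {0..<m}) * card {0..<n} + 4 \<le> k"
    using k by (simp add: card_Pow)
  ultimately have "\<not> tangled k (composite Lc T ab Le)"
    using composite_not_tangled[OF Lc_det Lc_untangled Lc_gs Le_det, where A = "Pow {0..<m}" and C = "{0..<n}"]
    by simp
  moreover have "\<forall>L\<in>set Ls. \<forall>w\<in>L. is_gs S T w"
    using Ls(2) by blast
  then have "op_apply T (n, m, e) Ls bs = composite Lc T ab Le"
    unfolding Lc_def ab_def Le_def by (rule op_apply_eq_composite[OF e(1) Ls(1)])
  ultimately show ?thesis
    using atom_deterministic_composite[OF Lc_det Le_det] by simp
qed

lemma generated_not_tangled: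
  fixes S T :: "nat set"
  assumes ops: "\<forall>c\<in>Ops. rcfo c" and k: "2 \<le> k" "\<And>n m e. (n, m, e) \<in> Ops \<Longrightarrow> 2 ^ m * n + 4 \<le> k"
  shows "L \<in> generated S T Ops \<Longrightarrow> atom_deterministic L \<and> \<not> tangled k L"
proof (induction rule: generated.induct)
  case (gen_act p)
  have "\<forall>w\<in>langK T (KAct p). length w \<le> 3"
    by auto
  then have "\<not> tangled k (langK T (KAct p))"
    using k(1) by (rule short_lang_not_tangled)
  then show ?case
    using atom_deterministic_single_action_lang[of T p] by blast
next
  case (gen_test b)
  have "\<forall>w\<in>langK T (KTest b). length w \<le> 3"
    by auto
  then have "\<not> tangled k (langK T (KTest b))"
    using k(1) by (rule short_lang_not_tangled)
  then show ?case
    using atom_deterministic_test_lang[of T b] by blast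
next
  case (gen_op n m e Ls bs)
  have "\<forall>L\<in>set Ls. atom_deterministic L \<and> \<not> tangled k L \<and> (\<forall>w\<in>L. is_gs S T w)"
  proof
    fix L assume "L \<in> set Ls"
    then have "atom_deterministic L \<and> \<not> tangled k L" "L \<in> Greg S T"
      using gen_op.IH by blast+
    then show "atom_deterministic L \<and> \<not> tangled k L \<and> (\<forall>w\<in>L. is_gs S T w)"
      unfolding Greg_def by blast
  qed
  moreover have "rcfo (n, m, e)"
    using ops gen_op.hyps(1) by blast
  ultimately show ?case
    using op_apply_not_tangled[OF _ gen_op.hyps(2) _ k(2)[OF gen_op.hyps(1)]] by blast
qed

theorem theorem6p2:
  fixes Ops :: "opcode set"
  assumes "finite Ops"
    and "\<forall>c\<in>Ops. rcfo c"
  shows "\<exists>k>0. Lk k \<notin> generated {1..k} {1..k} Ops"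
proof -
  define k where "k = (\<Sum>(n, m, e)\<in>Ops. 2 ^ m * n) + 4"
  have "2 ^ m * n + 4 \<le> k" if "(n, m, e) \<in> Ops" for n m e
    using member_le_sum[OF that, of "\<lambda>(n, m, e). 2 ^ m * n"] assms(1) unfolding k_def by simp
  moreover have "2 \<le> k"
    unfolding k_def by simp
  ultimately have "\<not> tangled k L" if "L \<in> generated {1..k} {1..k} Ops" for L
    using generated_not_tangled[OF assms(2)] that by blast
  moreover have "0 < k"
    unfolding k_def by simp
  ultimately show ?thesis
    using Lk_tangled by blast
qed

end
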